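(* Let $\phi\in\mathrm{Rat}(\mathbb{U})$ have degree $d>0$, let $z\in\mathbb{U}$ be a regular value of $\phi_e$, and let $f\in H^2$. Then: (a) If $\phi(\infty)\neq\infty$ and $z\neq 1/\overline{\phi(\infty)}$, then $$(C_\phi^* f)(z)=\frac{f(0)}{1-\overline{\phi(\infty)}\,z}+z\sum_{w\in\phi_e^{-1}(\{z\})}\frac{f(w)}{w\,\phi_e'(w)}.$$ (b) If $\phi(\infty)=\infty$, then $(C_\phi^* f)(z)=z\sum_{w\in\phi_e^{-1}(\{z\})}\frac{f(w)}{w\,\phi_e'(w)}$ if $z\neq0$, and $(C_\phi^*f)(0)=f(0)$.
   Context: $\mathbb{U}$ is the open unit disc and $\hat{\mathbb{C}}$ the Riemann sphere. $\mathrm{Rat}(\mathbb{U})$ is the set of rational functions of one complex variable mapping $\mathbb{U}$ into itself, regarded as maps $\hat{\mathbb{C}}\to\hat{\mathbb{C}}$ (so $\phi(\infty)\in\hat{\mathbb{C}}$ is defined; $1/\overline{\phi(\infty)}$ is interpreted as $\infty$ when $\phi(\infty)=0$). The degree of a rational function $p/q$ (relatively prime polynomials) is $\max(\deg p,\deg q)$. $\rho(z)=1/\overline{z}$ is inversion in the unit circle on $\hat{\mathbb{C}}$, and $\phi_e:=\rho\circ\phi\circ\rho$ (a rational function of the same degree as $\phi$, with $\phi_e^{-1}(\mathbb{U})\subset\mathbb{U}$). A point $z$ is a regular value of a rational function $R$ of degree $d$ if $R^{-1}(\{z\})$ consists of $d$ distinct points. $H^2$ is the Hardy space of holomorphic functions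 $f(z)=\sum_{n\ge0}\hat f(n)z^n$ on $\mathbb{U}$ with $\|f\|^2=\sum|\hat f(n)|^2<\infty$ and inner product $\langle f,g\rangle=\sum\hat f(n)\overline{\hat g(n)}$. $C_\phi f=f\circ\phi$ is the composition operator on $H^2$ and $C_\phi^*$ its Hilbert-space adjoint. *)

theory Defs
  imports "HOL-Analysis.Analysis" "HOL-Computational_Algebra.Polynomial"
begin

text \<open>The Riemann sphere is modelled as complex option: None is the point at infinity.\<close>

definition rho :: "complex option \<Rightarrow> complex option" where
  "rho x = (case x of None \<Rightarrow> Some 0
                    | Some w \<Rightarrow> (if w = 0 then None else Some (1 / cnj w)))"

text \<open>The rational function p/q (p, q coprime, q nonzero) as a map of the Riemann sphere.\<close>
definition rat_eval :: "complex poly \<Rightarrow> complex poly \<Rightarrow> complex option \<Rightarrow> complex option" where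
  "rat_eval p q x = (case x of
      None \<Rightarrow> (if degree q < degree p then None
               else if degree p = degree q then Some (lead_coeff p / lead_coeff q)
               else Some 0)
    | Some w \<Rightarrow> (if poly q w = 0 then None else Some (poly p w / poly q w)))"

definition rat_degree :: "complex poly \<Rightarrow> complex poly \<Rightarrow> nat" where
  "rat_degree p q = max (degree p) (degree q)"

definition in_RatU :: "complex poly \<Rightarrow> complex poly \<Rightarrow> bool" where
  "in_RatU p q \<longleftrightarrow> q \<noteq> 0 \<and> coprime p q \<and>
     (\<forall>z. cmod z < 1 \<longrightarrow> poly q z \<noteq> 0 \<and> cmod (poly p z / poly q z) < 1)"

definition phi_e :: "complex poly \<Rightarrow> complex poly \<Rightarrow> complex option \<Rightarrow> complex option" where
  "phi_e p q = rho \<circ> rat_eval p q \<circ> rho"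

text \<open>phi_e viewed as a complex function (value 0 at its poles; only used near
  points where phi_e is finite, e.g. for derivatives).\<close>
definition phi_e_c :: "complex poly \<Rightarrow> complex poly \<Rightarrow> complex \<Rightarrow> complex" where
  "phi_e_c p q w = (case phi_e p q (Some w) of Some v \<Rightarrow> v | None \<Rightarrow> 0)"

definition regular_value :: "(complex option \<Rightarrow> complex option) \<Rightarrow> nat \<Rightarrow> complex option \<Rightarrow> bool" where
  "regular_value R d z \<longleftrightarrow> finite (R -` {z}) \<and> card (R -` {z}) = d"

definition h2_coeff :: "(complex \<Rightarrow> complex) \<Rightarrow> nat \<Rightarrow> complex" where
  "h2_coeff f n = (deriv ^^ n) f 0 / fact n"

definition H2 :: "(complex \<Rightarrow> complex) set" where
  "H2 = {f. f holomorphic_on ball 0 1 \<and> summable (\<lambda>n. (cmod (h2_coeff f n))\<^sup>2)}"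

definition h2_inner :: "(complex \<Rightarrow> complex) \<Rightarrow> (complex \<Rightarrow> complex) \<Rightarrow> complex" where
  "h2_inner f g = (\<Sum>n. h2_coeff f n * cnj (h2_coeff g n))"

definition comp_op :: "complex poly \<Rightarrow> complex poly \<Rightarrow> (complex \<Rightarrow> complex) \<Rightarrow> (complex \<Rightarrow> complex)" where
  "comp_op p q h = (\<lambda>w. h (poly p w / poly q w))"

text \<open>Adjoint of C_phi; the representative is normalised to vanish off the disc.\<close>
definition comp_adj :: "complex poly \<Rightarrow> complex poly \<Rightarrow> (complex \<Rightarrow> complex) \<Rightarrow> (complex \<Rightarrow> complex)" where
  "comp_adj p q f = (THE g. g \<in> H2 \<and> (\<forall>w. 1 \<le> cmod w \<longrightarrow> g w = 0) \<and>
      (\<forall>h\<in>H2. h2_inner (comp_op p q h) f = h2_inner h g))"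

end

theory Submission
  imports Defs "HOL-Complex_Analysis.Complex_Analysis"
begin

text \<open>
  Composition with a holomorphic self-map \<open>\<phi>\<close> of the disc is bounded on \<open>H\<^sup>2\<close> (Littlewood's
  subordination principle, after moving \<open>\<phi>(0)\<close> to the origin by a disc automorphism), so the adjoint
  exists: it is the function whose Taylor coefficients are \<open>\<langle>\<phi>\<^sup>n, f\<rangle>\<close>, and its value at \<open>z\<close> is
  \<open>\<langle>f, k\<^sub>z \<circ> \<phi>\<rangle>\<close> for the reproducing kernel \<open>k\<^sub>z(w) = 1 / (1 - cnj z * w)\<close>.
  For \<open>\<phi> = p/q\<close> rational, \<open>k\<^sub>z \<circ> \<phi> = q / (q - cnj z * p)\<close> is holomorphic beyond the closed
  disc, so Parseval's identity on the circles of radii \<open>r\<close> and \<open>1/r\<close> turns this inner product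
  into the contour integral of \<open>f(w) Q(w) / (w (Q(w) - z P(w)))\<close> over \<open>|w| = r\<close>, where
  \<open>\<phi>\<^sub>e = Q/P\<close>. Since \<open>z\<close> is a regular value, the zeros of \<open>Q - z P\<close> are the \<open>d\<close> simple points
  of \<open>\<phi>\<^sub>e\<^sup>-\<^sup>1(z)\<close>, all inside the disc, and the residue theorem gives the formula; the residue at
  \<open>0\<close> is the term \<open>f(0) / (1 - cnj (\<phi>(\<infinity>)) * z)\<close>, which vanishes when \<open>\<phi>(\<infinity>) = \<infinity>\<close>.
\<close>

section \<open>Integrals over circles centred at the origin\<close>

definition cis_turn :: "real \<Rightarrow> complex" where
  "cis_turn t = exp (2 * of_real pi * \<i> * of_real t)"

lemma norm_cis_turn [simp]: "cmod (cis_turn t) = 1"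
  unfolding cis_turn_def by (simp add: norm_exp_eq_Re)

lemma cis_turn_nonzero [simp]: "cis_turn t \<noteq> 0"
  unfolding cis_turn_def by simp

lemma cnj_cis_turn: "cnj (cis_turn t) = inverse (cis_turn t)"
  unfolding cis_turn_def by (simp add: exp_cnj exp_minus[symmetric])

lemma continuous_on_cis_turn [continuous_intros]: "continuous_on A cis_turn"
  unfolding cis_turn_def by (intro continuous_intros)

lemma circlepath_0_eq: "circlepath 0 r t = of_real r * cis_turn t"
  unfolding circlepath cis_turn_def by simp

lemma has_contour_integral_circlepath_0_iff:
  "(F has_contour_integral (2 * of_real pi * \<i> * I)) (circlepath 0 r) \<longleftrightarrow>
   ((\<lambda>t. F (of_real r * cis_turn t) * (of_real r * cis_turn t)) has_integral I) {0..1}"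
proof -
  have "vector_derivative (circlepath 0 r) (at t within {0..1}) =
          2 * of_real pi * \<i> * (of_real r * cis_turn t)" if "t \<in> {0..1}" for t
    using that by (simp add: vector_derivative_circlepath01 cis_turn_def)
  hence "(F has_contour_integral (2 * of_real pi * \<i> * I)) (circlepath 0 r) \<longleftrightarrow>
        ((\<lambda>t. (2 * of_real pi * \<i>) * (F (of_real r * cis_turn t) * (of_real r * cis_turn t)))
           has_integral (2 * of_real pi * \<i> * I)) {0..1}"
    unfolding has_contour_integral_def by (intro has_integral_cong) (simp add: circlepath_0_eq)
  also have "\<dots> \<longleftrightarrow> ((\<lambda>t. F (of_real r * cis_turn t) * (of_real r * cis_turn t)) has_integral I) {0..1}"
    by (subst has_integral_mult_right_iff) simp_all
  finally show ?thesis .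
qed

lemma continuous_on_circle_comp:
  assumes "v holomorphic_on ball 0 R" "0 \<le> s" "s < R"
  shows "continuous_on A (\<lambda>t. v (of_real s * cis_turn t))"
proof -
  have "continuous_on UNIV (v \<circ> (\<lambda>t. of_real s * cis_turn t))"
  proof (rule continuous_on_compose)
    show "continuous_on ((\<lambda>t. of_real s * cis_turn t) ` UNIV) v"
      using holomorphic_on_imp_continuous_on[OF assms(1)]
      by (rule continuous_on_subset) (use assms in \<open>auto simp: norm_mult\<close>)
  qed (intro continuous_intros)
  thus ?thesis unfolding o_def by (rule continuous_on_subset) simp
qed

lemma h2_coeff_circle_integral:
  assumes holo: "v holomorphic_on ball 0 R" and s: "0 < s" "s < R"
  shows "((\<lambda>t. v (of_real s * cis_turn t) * cnj (cis_turn t) ^ n)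
           has_integral (of_real s ^ n * h2_coeff v n)) {0..1}"
proof -
  have "continuous_on (cball 0 s) v"
    by (rule continuous_on_subset[OF holomorphic_on_imp_continuous_on[OF holo]]) (use s in auto)
  moreover have "v holomorphic_on ball 0 s" by (rule holomorphic_on_subset[OF holo]) (use s in auto)
  ultimately have "((\<lambda>u. v u / (u - 0) ^ Suc n) has_contour_integral
        2 * of_real pi * \<i> * h2_coeff v n) (circlepath 0 s)"
    using s Cauchy_has_contour_integral_higher_derivative_circlepath[of 0 s v 0 n]
    by (simp add: h2_coeff_def)
  hence "((\<lambda>t. v (of_real s * cis_turn t) / (of_real s * cis_turn t) ^ Suc n * (of_real s * cis_turn t))
           has_integral h2_coeff v n) {0..1}"
    unfolding has_contour_integral_circlepath_0_iff by simp
  hence "((\<lambda>t. of_real s ^ n * (v (of_real s * cis_turn t) / (of_real s * cis_turn t) ^ Suc n *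
           (of_real s * cis_turn t))) has_integral (of_real s ^ n * h2_coeff v n)) {0..1}"
    by (rule has_integral_mult_right)
  moreover have "of_real s ^ n * (v (of_real s * cis_turn t) / (of_real s * cis_turn t) ^ Suc n *
                   (of_real s * cis_turn t)) = v (of_real s * cis_turn t) * cnj (cis_turn t) ^ n" for t
    using s by (simp add: cnj_cis_turn power_mult_distrib power_inverse divide_inverse)
               (simp add: field_simps)
  ultimately show ?thesis by simp
qed

lemma h2_coeff_sums:
  assumes "v holomorphic_on ball 0 R" "cmod w < R"
  shows "(\<lambda>n. h2_coeff v n * w ^ n) sums v w"
  using holomorphic_power_series[OF assms(1), of w] assms(2) by (simp add: h2_coeff_def)

lemma summable_norm_h2_coeff:
  assumes "v holomorphic_on ball 0 R" "0 \<le> s" "s < R"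
  shows "summable (\<lambda>n. cmod (h2_coeff v n) * s ^ n)"
proof -
  have "summable (\<lambda>n. norm (h2_coeff v n * of_real s ^ n))"
  proof (rule powser_insidea)
    have "cmod (of_real ((s + R) / 2) :: complex) < R" using assms by (simp only: norm_of_real) auto
    from sums_summable[OF h2_coeff_sums[OF assms(1) this]]
    show "summable (\<lambda>n. h2_coeff v n * of_real ((s + R) / 2) ^ n)" .
  qed (use assms in \<open>simp only: norm_of_real; auto\<close>)
  thus ?thesis using assms(2) by (simp add: norm_mult norm_power)
qed

lemma norm_on_circle_le_suminf:
  assumes "v holomorphic_on ball 0 R" "0 \<le> s" "s < R"
  shows "cmod (v (of_real s * cis_turn t)) \<le> (\<Sum>n. cmod (h2_coeff v n) * s ^ n)"
proof -
  have sums: "(\<lambda>n. h2_coeff v n * (of_real s * cis_turn t) ^ n) sums v (of_real s * cis_turn t)"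
    using assms by (intro h2_coeff_sums[OF assms(1)]) (simp add: norm_mult)
  have "summable (\<lambda>n. norm (h2_coeff v n * (of_real s * cis_turn t) ^ n))"
    using summable_norm_h2_coeff[OF assms] assms(2) by (simp add: norm_mult norm_power)
  from summable_norm[OF this] sums show ?thesis
    using assms(2) by (simp add: sums_iff norm_mult norm_power)
qed

lemma integral_suminf_dominated:
  fixes x :: "nat \<Rightarrow> real \<Rightarrow> complex"
  assumes cont: "\<And>m. continuous_on {0..1} (x m)"
    and bound: "\<And>m t. t \<in> {0..1} \<Longrightarrow> cmod (x m t) \<le> M m"
    and summ: "summable M"
    and sms: "\<And>t. t \<in> {0..1} \<Longrightarrow> (\<lambda>m. x m t) sums X t"
  shows "(\<lambda>m. integral {0..1} (x m)) sums integral {0..1} X"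
proof -
  have M0: "M m \<ge> 0" for m
    using bound[of 0 m] by (meson norm_ge_zero order_trans atLeastAtMost_iff zero_le_one order_refl)
  define S where "S k t = (\<Sum>m<k. x m t)" for k t
  have S_integrable: "S k integrable_on {0..1}" for k
    unfolding S_def by (intro integrable_continuous_real continuous_intros cont)
  have "(\<lambda>k. integral {0..1} (S k)) \<longlonglongrightarrow> integral {0..1} X"
  proof (rule dominated_convergence(2)[OF S_integrable, of "\<lambda>t. suminf M"])
    show "(\<lambda>t. suminf M) integrable_on {0..1::real}"
      by (rule integrable_continuous_real) (rule continuous_on_const)
    fix k t assume t: "t \<in> {0..1::real}"
    have "cmod (S k t) \<le> (\<Sum>m<k. M m)"
      unfolding S_def by (rule order_trans[OF norm_sum sum_mono[OF bound[OF t]]])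
    also have "\<dots> \<le> suminf M" using summ M0 by (intro sum_le_suminf) auto
    finally show "norm (S k t) \<le> suminf M" .
  next
    fix t :: real assume "t \<in> {0..1}"
    thus "(\<lambda>k. S k t) \<longlonglongrightarrow> X t" using sms unfolding sums_def S_def by blast
  qed
  moreover have "integral {0..1} (S k) = (\<Sum>m<k. integral {0..1} (x m))" for k
    unfolding S_def by (intro integral_sum) (auto intro: integrable_continuous_real cont)
  ultimately show ?thesis unfolding sums_def by simp
qed

lemma integral_power_mult_cnj_on_circle:
  assumes v: "v holomorphic_on ball 0 R" and s: "0 < s" "s < R"
  shows "integral {0..1} (\<lambda>t. (of_real r * cis_turn t) ^ m * cnj (v (of_real s * cis_turn t))) =
           of_real (r ^ m * s ^ m) * cnj (h2_coeff v m)"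
proof -
  have "(\<lambda>t. (of_real r * cis_turn t) ^ m * cnj (v (of_real s * cis_turn t))) =
          (\<lambda>t. of_real r ^ m * cnj (v (of_real s * cis_turn t) * cnj (cis_turn t) ^ m))"
    by (auto simp: power_mult_distrib)
  hence "integral {0..1} (\<lambda>t. (of_real r * cis_turn t) ^ m * cnj (v (of_real s * cis_turn t))) =
           of_real r ^ m * cnj (integral {0..1} (\<lambda>t. v (of_real s * cis_turn t) * cnj (cis_turn t) ^ m))"
    by (simp only: integral_mult_right integral_cnj)
  also have "integral {0..1} (\<lambda>t. v (of_real s * cis_turn t) * cnj (cis_turn t) ^ m) =
               of_real s ^ m * h2_coeff v m"
    using h2_coeff_circle_integral[OF v s] by (rule integral_unique)
  finally show ?thesis by simp
qed

lemma circle_integral_product_sums: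
  assumes u: "u holomorphic_on ball 0 R1" and v: "v holomorphic_on ball 0 R2"
    and r: "0 < r" "r < R1" and s: "0 < s" "s < R2"
  shows "(\<lambda>n. h2_coeff u n * cnj (h2_coeff v n) * of_real (r ^ n * s ^ n)) sums
           integral {0..1} (\<lambda>t. u (of_real r * cis_turn t) * cnj (v (of_real s * cis_turn t)))"
proof -
  define B where "B = (\<Sum>n. cmod (h2_coeff v n) * s ^ n)"
  define x where "x m t = h2_coeff u m * ((of_real r * cis_turn t) ^ m * cnj (v (of_real s * cis_turn t)))"
    for m t
  have "(\<lambda>m. integral {0..1} (x m)) sums
          integral {0..1} (\<lambda>t. u (of_real r * cis_turn t) * cnj (v (of_real s * cis_turn t)))"
  proof (rule integral_suminf_dominated)
    fix m show "continuous_on {0..1} (x m)" unfolding x_def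
      by (intro continuous_intros continuous_on_circle_comp[OF v]) (use s in auto)
    fix t :: real
    have "cmod (x m t) = cmod (h2_coeff u m) * r ^ m * cmod (v (of_real s * cis_turn t))"
      unfolding x_def using r by (simp add: norm_mult norm_power)
    also have "\<dots> \<le> cmod (h2_coeff u m) * r ^ m * B"
      unfolding B_def using norm_on_circle_le_suminf[OF v] s r by (intro mult_left_mono) auto
    finally show "cmod (x m t) \<le> cmod (h2_coeff u m) * r ^ m * B" .
  next
    show "summable (\<lambda>m. cmod (h2_coeff u m) * r ^ m * B)"
      using summable_norm_h2_coeff[OF u] r by (intro summable_mult2) auto
  next
    fix t :: real
    have "(\<lambda>m. h2_coeff u m * (of_real r * cis_turn t) ^ m) sums u (of_real r * cis_turn t)"
      using r by (intro h2_coeff_sums[OF u]) (simp add: norm_mult)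
    thus "(\<lambda>m. x m t) sums (u (of_real r * cis_turn t) * cnj (v (of_real s * cis_turn t)))"
      unfolding x_def using sums_mult2 by (fastforce simp: mult.assoc)
  qed
  moreover have "integral {0..1} (x m) = h2_coeff u m * cnj (h2_coeff v m) * of_real (r ^ m * s ^ m)" for m
    unfolding x_def integral_mult_right integral_power_mult_cnj_on_circle[OF v s] by simp
  ultimately show ?thesis by simp
qed

lemma fps_expansion_0_eq: "fps_expansion u 0 = Abs_fps (h2_coeff u)"
  unfolding fps_expansion_def h2_coeff_def ..

lemma h2_coeff_eqI: "u has_fps_expansion F \<Longrightarrow> h2_coeff u n = fps_nth F n"
  using fps_nth_fps_expansion by (simp add: h2_coeff_def)

lemma has_fps_expansion_h2_coeff:
  "u holomorphic_on ball 0 R \<Longrightarrow> 0 < R \<Longrightarrow> u has_fps_expansion Abs_fps (h2_coeff u)"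
  using has_fps_expansion_fps_expansion[of "ball 0 R" u] by (simp add: fps_expansion_0_eq)

lemma h2_coeff_power_series:
  assumes "\<And>w. cmod w < R \<Longrightarrow> (\<lambda>n. a n * w ^ n) sums u w" "0 < R"
  shows "h2_coeff u n = a n"
proof -
  have "eventually (\<lambda>w. w \<in> ball 0 R) (nhds (0::complex))"
    using assms(2) by (intro eventually_nhds_in_open) auto
  hence "u has_fps_expansion Abs_fps a"
    by (intro has_fps_expansionI) (auto elim!: eventually_mono intro: assms(1))
  thus ?thesis by (simp add: h2_coeff_eqI)
qed

lemma h2_coeff_cong:
  assumes "\<And>w. cmod w < R \<Longrightarrow> u w = v w" "0 < R"
  shows "h2_coeff u n = h2_coeff v n"
proof -
  have "eventually (\<lambda>w. u w = v w) (nhds (0::complex))"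
    using eventually_nhds_in_open[of "ball 0 R" 0] assms by (auto elim!: eventually_mono)
  thus ?thesis using fps_expansion_cong[of u v 0] by (simp add: fps_expansion_0_eq fps_eq_iff)
qed

lemma h2_coeff_sum:
  assumes "\<And>j. j \<in> J \<Longrightarrow> F j holomorphic_on ball 0 1"
  shows "h2_coeff (\<lambda>w. \<Sum>j\<in>J. c j * F j w) n = (\<Sum>j\<in>J. c j * h2_coeff (F j) n)"
proof -
  have "(\<lambda>w. \<Sum>j\<in>J. c j * F j w) has_fps_expansion (\<Sum>j\<in>J. fps_const (c j) * Abs_fps (h2_coeff (F j)))"
    by (intro has_fps_expansion_sum has_fps_expansion_cmult_left has_fps_expansion_h2_coeff[where R=1] assms)
       auto
  thus ?thesis by (simp add: h2_coeff_eqI fps_sum_nth)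
qed

lemma h2_coeff_diff:
  assumes "u holomorphic_on ball 0 1" "v holomorphic_on ball 0 1"
  shows "h2_coeff (\<lambda>w. u w - v w) n = h2_coeff u n - h2_coeff v n"
proof -
  have "(\<lambda>w. u w - v w) has_fps_expansion Abs_fps (h2_coeff u) - Abs_fps (h2_coeff v)"
    by (intro has_fps_expansion_diff has_fps_expansion_h2_coeff[where R=1] assms) auto
  thus ?thesis by (simp add: h2_coeff_eqI)
qed

lemma h2_coeff_0: "h2_coeff u 0 = u 0"
  by (simp add: h2_coeff_def)

lemma h2_coeff_monomial: "h2_coeff (\<lambda>w. w ^ m) n = (if n = m then 1 else 0)"
proof (rule h2_coeff_power_series[of 1])
  fix w :: complex
  show "(\<lambda>n. (if n = m then 1 else 0) * w ^ n) sums w ^ m"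
  proof -
    have "(\<lambda>n. (if n = m then 1 else 0) * w ^ n) = (\<lambda>n. if n = m then w ^ n else 0)" by auto
    thus ?thesis using sums_single[of m "\<lambda>n. w ^ n"] by simp
  qed
qed simp

lemma h2_coeff_polynomial:
  "h2_coeff (\<lambda>w. \<Sum>k<N. c k * w ^ k) n = (if n < N then c n else 0)"
proof (rule h2_coeff_power_series[of 1])
  fix w :: complex
  have "(\<lambda>n. (if n < N then c n else 0) * w ^ n) sums (\<Sum>k\<in>{..<N}. (if k < N then c k else 0) * w ^ k)"
    by (rule sums_finite) auto
  thus "(\<lambda>n. (if n < N then c n else 0) * w ^ n) sums (\<Sum>k<N. c k * w ^ k)" by simp
qed simp

section \<open>Integral means and the Hardy norm\<close>

definition h2_norm2 :: "(complex \<Rightarrow> complex) \<Rightarrow> real" where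
  "h2_norm2 u = (\<Sum>n. (cmod (h2_coeff u n))\<^sup>2)"

definition circle_mean2 :: "(complex \<Rightarrow> complex) \<Rightarrow> real \<Rightarrow> real" where
  "circle_mean2 u r = integral {0..1} (\<lambda>t. (cmod (u (of_real r * cis_turn t)))\<^sup>2)"

lemma H2_D:
  "u \<in> H2 \<Longrightarrow> u holomorphic_on ball 0 1"
  "u \<in> H2 \<Longrightarrow> summable (\<lambda>n. (cmod (h2_coeff u n))\<^sup>2)"
  unfolding H2_def by auto

lemma h2_norm2_nonneg: "u \<in> H2 \<Longrightarrow> 0 \<le> h2_norm2 u"
  unfolding h2_norm2_def using H2_D(2) by (auto intro: suminf_nonneg)

lemma has_integral_circle_mean2:
  assumes "u holomorphic_on ball 0 R" "0 \<le> r" "r < R"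
  shows "((\<lambda>t. (cmod (u (of_real r * cis_turn t)))\<^sup>2) has_integral circle_mean2 u r) {0..1}"
  unfolding circle_mean2_def
  by (intro integrable_integral integrable_continuous_real continuous_intros
      continuous_on_circle_comp[OF assms])

lemma circle_mean2_sums:
  assumes u: "u holomorphic_on ball 0 R" and r: "0 < r" "r < R"
  shows "(\<lambda>n. (cmod (h2_coeff u n))\<^sup>2 * r ^ (2 * n)) sums circle_mean2 u r"
proof -
  have series: "(\<lambda>n. h2_coeff u n * cnj (h2_coeff u n) * of_real (r ^ n * r ^ n)) sums
          integral {0..1} (\<lambda>t. u (of_real r * cis_turn t) * cnj (u (of_real r * cis_turn t)))"
    by (rule circle_integral_product_sums[OF u u r r])
  have terms: "h2_coeff u n * cnj (h2_coeff u n) * of_real (r ^ n * r ^ n) =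
                 of_real ((cmod (h2_coeff u n))\<^sup>2 * r ^ (2 * n))" for n
    unfolding complex_norm_square[symmetric] power_add[symmetric] mult_2[symmetric] by simp
  have "((\<lambda>t. complex_of_real ((cmod (u (of_real r * cis_turn t)))\<^sup>2)) has_integral
           of_real (circle_mean2 u r)) {0..1}"
    using r by (intro has_integral_of_real has_integral_circle_mean2[OF u]) auto
  hence integral: "integral {0..1} (\<lambda>t. u (of_real r * cis_turn t) * cnj (u (of_real r * cis_turn t))) =
                     of_real (circle_mean2 u r)"
    unfolding complex_norm_square by (rule integral_unique)
  show ?thesis using series unfolding terms integral sums_of_real_iff .
qed

lemma H2_if_circle_mean2_bounded:
  assumes u: "u holomorphic_on ball 0 1" and B: "\<And>r. 0 < r \<Longrightarrow> r < 1 \<Longrightarrow> circle_mean2 u r \<le> B"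
  shows "u \<in> H2" "h2_norm2 u \<le> B"
proof -
  have partial_le: "(\<Sum>n<N. (cmod (h2_coeff u n))\<^sup>2) \<le> B" for N
  proof -
    have "eventually (\<lambda>r. (\<Sum>n<N. (cmod (h2_coeff u n))\<^sup>2 * r ^ (2 * n)) \<le> B) (at_left (1::real))"
    proof (rule eventually_mono[OF eventually_at_left_real[of 0 1]])
      fix r :: real assume r: "r \<in> {0<..<1}"
      have S: "(\<lambda>n. (cmod (h2_coeff u n))\<^sup>2 * r ^ (2 * n)) sums circle_mean2 u r"
        using r by (intro circle_mean2_sums[OF u]) auto
      have "(\<Sum>n<N. (cmod (h2_coeff u n))\<^sup>2 * r ^ (2 * n)) \<le> circle_mean2 u r"
        unfolding sums_unique[OF S] by (rule sum_le_suminf[OF sums_summable[OF S]]) auto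
      also have "\<dots> \<le> B" using B r by auto
      finally show "(\<Sum>n<N. (cmod (h2_coeff u n))\<^sup>2 * r ^ (2 * n)) \<le> B" .
    qed simp
    moreover have "((\<lambda>r. \<Sum>n<N. (cmod (h2_coeff u n))\<^sup>2 * r ^ (2 * n)) \<longlongrightarrow>
                     (\<Sum>n<N. (cmod (h2_coeff u n))\<^sup>2 * 1 ^ (2 * n))) (at_left (1::real))"
      by (intro tendsto_intros)
    ultimately show ?thesis using tendsto_upperbound[of _ _ "at_left (1::real)"] by fastforce
  qed
  have "summable (\<lambda>n. (cmod (h2_coeff u n))\<^sup>2)"
    by (rule summableI_nonneg_bounded[OF _ partial_le]) simp
  thus "u \<in> H2" using u unfolding H2_def by simp
  show "h2_norm2 u \<le> B" unfolding h2_norm2_def using \<open>summable _\<close> partial_le by (rule suminf_le_const)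
qed

lemma circle_mean2_mono:
  assumes "u holomorphic_on ball 0 1" "v holomorphic_on ball 0 1" "0 < r" "r < 1"
    and "\<And>t. cmod (u (of_real r * cis_turn t)) \<le> cmod (v (of_real r * cis_turn t))"
  shows "circle_mean2 u r \<le> circle_mean2 v r"
proof (rule has_integral_le)
  show "((\<lambda>t. (cmod (u (of_real r * cis_turn t)))\<^sup>2) has_integral circle_mean2 u r) {0..1}"
    "((\<lambda>t. (cmod (v (of_real r * cis_turn t)))\<^sup>2) has_integral circle_mean2 v r) {0..1}"
    using assms(3,4) by (auto intro: has_integral_circle_mean2 assms(1,2))
qed (simp add: power_mono assms(5))

lemma circle_mean2_cong:
  assumes "\<And>w. cmod w < 1 \<Longrightarrow> u w = v w" "0 < r" "r < 1"
  shows "circle_mean2 u r = circle_mean2 v r"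
  unfolding circle_mean2_def using assms by (simp add: norm_mult)

text \<open>The cross terms integrate to zero by the mean value property of a function vanishing at 0.\<close>

lemma circle_mean2_add_const:
  assumes U: "U holomorphic_on ball 0 1" "U 0 = 0" and r: "0 < r" "r < 1"
  shows "circle_mean2 (\<lambda>w. a + U w) r = (cmod a)\<^sup>2 + circle_mean2 U r"
proof -
  define F where "F = (\<lambda>t. U (of_real r * cis_turn t))"
  have F0: "(F has_integral 0) {0..1}"
    using h2_coeff_circle_integral[OF U(1) r, of 0] U(2) by (simp add: F_def h2_coeff_0)
  have expand: "complex_of_real ((cmod (a + F t))\<^sup>2) =
      of_real ((cmod a)\<^sup>2) + of_real ((cmod (F t))\<^sup>2) + (cnj a * F t + a * cnj (F t))" for t
    unfolding complex_norm_square by (simp add: algebra_simps)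
  have "((\<lambda>t. of_real ((cmod a)\<^sup>2) + of_real ((cmod (F t))\<^sup>2) + (cnj a * F t + a * cnj (F t))) has_integral
         (of_real ((cmod a)\<^sup>2) + of_real (circle_mean2 U r) + (cnj a * 0 + a * cnj 0))) {0..1}"
  proof (intro has_integral_add has_integral_of_real has_integral_mult_right F0)
    show "((\<lambda>x. (cmod a)\<^sup>2) has_integral (cmod a)\<^sup>2) {0..1::real}"
      using has_integral_const_real[of "(cmod a)\<^sup>2" "0::real" "1::real"] by simp
    show "((\<lambda>t. (cmod (F t))\<^sup>2) has_integral circle_mean2 U r) {0..1}"
      unfolding F_def using r by (intro has_integral_circle_mean2[OF U(1)]) auto
    show "((\<lambda>x. cnj (F x)) has_integral cnj 0) {0..1}"
      using F0 has_integral_cnj[of F 0 "{0..1}"] by (simp add: o_def)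
  qed
  hence "((\<lambda>t. complex_of_real ((cmod (a + F t))\<^sup>2)) has_integral
           of_real ((cmod a)\<^sup>2 + circle_mean2 U r)) {0..1}"
    unfolding expand by simp
  hence "((\<lambda>t. Re (complex_of_real ((cmod (a + F t))\<^sup>2))) has_integral
           Re (of_real ((cmod a)\<^sup>2 + circle_mean2 U r))) {0..1}"
    by (rule has_integral_Re)
  hence "((\<lambda>t. (cmod (a + F t))\<^sup>2) has_integral ((cmod a)\<^sup>2 + circle_mean2 U r)) {0..1}"
    by simp
  thus ?thesis unfolding circle_mean2_def F_def by (rule integral_unique)
qed

section \<open>Littlewood's subordination principle\<close>

definition h2_trunc :: "(complex \<Rightarrow> complex) \<Rightarrow> nat \<Rightarrow> complex \<Rightarrow> complex" where
  "h2_trunc u N w = (\<Sum>n<N. h2_coeff u n * w ^ n)"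

locale disc_selfmap =
  fixes \<phi> :: "complex \<Rightarrow> complex"
  assumes holomorphic: "\<phi> holomorphic_on ball 0 1"
    and norm_less_1: "\<And>w. cmod w < 1 \<Longrightarrow> cmod (\<phi> w) < 1"
begin

lemma holomorphic_on_comp:
  assumes "k holomorphic_on ball 0 1"
  shows "(\<lambda>w. k (\<phi> w)) holomorphic_on ball 0 1"
proof -
  have "(k \<circ> \<phi>) holomorphic_on ball 0 1"
    by (rule holomorphic_on_compose_gen[OF holomorphic assms]) (use norm_less_1 in auto)
  thus ?thesis by (simp add: o_def)
qed

lemma circle_image_bound:
  assumes "0 < r" "r < 1"
  obtains \<rho> where "0 \<le> \<rho>" "\<rho> < 1" "\<And>t. t \<in> {0..1} \<Longrightarrow> cmod (\<phi> (of_real r * cis_turn t)) \<le> \<rho>"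
proof -
  have cont: "continuous_on {0..1} (\<lambda>t. cmod (\<phi> (of_real r * cis_turn t)))"
    by (intro continuous_intros continuous_on_circle_comp[OF holomorphic]) (use assms in auto)
  obtain t0 where t0: "t0 \<in> {0..1::real}"
    "\<And>t. t \<in> {0..1} \<Longrightarrow> cmod (\<phi> (of_real r * cis_turn t)) \<le> cmod (\<phi> (of_real r * cis_turn t0))"
    using continuous_attains_sup[OF compact_Icc _ cont] by fastforce
  show ?thesis
  proof (rule that)
    show "cmod (\<phi> (of_real r * cis_turn t0)) < 1" using norm_less_1 assms by (simp add: norm_mult)
  qed (use t0 in auto)
qed

text \<open>On each circle of radius \<open>r < 1\<close> the image of \<open>\<phi>\<close> stays in a compact subdisc, where the
  Taylor series of \<open>k\<close> converges uniformly.\<close>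

lemma circle_mean2_comp_le_of_trunc:
  assumes k: "k holomorphic_on ball 0 1" and r: "0 < r" "r < 1"
    and bound: "\<And>N. circle_mean2 (\<lambda>w. h2_trunc k N (\<phi> w)) r \<le> B"
  shows "circle_mean2 (\<lambda>w. k (\<phi> w)) r \<le> B"
proof -
  obtain \<rho> where \<rho>: "0 \<le> \<rho>" "\<rho> < 1" "\<And>t. t \<in> {0..1} \<Longrightarrow> cmod (\<phi> (of_real r * cis_turn t)) \<le> \<rho>"
    using circle_image_bound[OF r] by blast
  define C where "C = (\<Sum>n. cmod (h2_coeff k n) * \<rho> ^ n)"
  have summable_C: "summable (\<lambda>n. cmod (h2_coeff k n) * \<rho> ^ n)"
    by (rule summable_norm_h2_coeff[OF k \<rho>(1,2)])
  have cont: "continuous_on {0..1} (\<lambda>t. \<phi> (of_real r * cis_turn t))"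
    by (intro continuous_on_circle_comp[OF holomorphic]) (use r in auto)
  have "(\<lambda>N. circle_mean2 (\<lambda>w. h2_trunc k N (\<phi> w)) r) \<longlonglongrightarrow> circle_mean2 (\<lambda>w. k (\<phi> w)) r"
    unfolding circle_mean2_def
  proof (rule dominated_convergence(2)[where h = "\<lambda>t. C\<^sup>2"])
    fix N
    show "(\<lambda>t. (cmod (h2_trunc k N (\<phi> (of_real r * cis_turn t))))\<^sup>2) integrable_on {0..1}"
      unfolding h2_trunc_def by (intro integrable_continuous_real continuous_intros cont)
  next
    show "(\<lambda>t. C\<^sup>2) integrable_on {0..1::real}"
      by (rule integrable_continuous_real) (rule continuous_on_const)
  next
    fix N and t :: real assume t: "t \<in> {0..1}"
    have "cmod (h2_trunc k N (\<phi> (of_real r * cis_turn t))) \<le> (\<Sum>n<N. cmod (h2_coeff k n) * \<rho> ^ n)"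
      unfolding h2_trunc_def
      by (rule order_trans[OF norm_sum sum_mono])
         (use \<rho>(3)[OF t] \<rho>(1) in \<open>auto simp: norm_mult norm_power intro!: mult_left_mono power_mono\<close>)
    also have "\<dots> \<le> C" unfolding C_def by (rule sum_le_suminf[OF summable_C]) (use \<rho>(1) in auto)
    finally show "norm ((cmod (h2_trunc k N (\<phi> (of_real r * cis_turn t))))\<^sup>2) \<le> C\<^sup>2"
      by (simp add: power_mono)
  next
    fix t :: real assume t: "t \<in> {0..1}"
    have "(\<lambda>n. h2_coeff k n * (\<phi> (of_real r * cis_turn t)) ^ n) sums k (\<phi> (of_real r * cis_turn t))"
      by (rule h2_coeff_sums[OF k]) (use norm_less_1 r in \<open>simp add: norm_mult\<close>)
    hence "(\<lambda>N. h2_trunc k N (\<phi> (of_real r * cis_turn t))) \<longlonglongrightarrow> k (\<phi> (of_real r * cis_turn t))"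
      unfolding sums_def h2_trunc_def .
    thus "(\<lambda>N. (cmod (h2_trunc k N (\<phi> (of_real r * cis_turn t))))\<^sup>2) \<longlonglongrightarrow>
            (cmod (k (\<phi> (of_real r * cis_turn t))))\<^sup>2"
      by (intro tendsto_intros)
  qed
  thus ?thesis using bound by (intro tendsto_le[OF _ tendsto_const]) auto
qed

text \<open>Induction on the degree: peel off the constant term, and use \<open>|\<phi>| \<le> 1\<close> to drop one factor \<open>\<phi>\<close>.\<close>

lemma littlewood_polynomial:
  assumes "\<phi> 0 = 0" and r: "0 < r" "r < 1"
  shows "circle_mean2 (\<lambda>w. \<Sum>n<N. a n * (\<phi> w) ^ n) r \<le> (\<Sum>n<N. (cmod (a n))\<^sup>2)"
proof (induction N arbitrary: a)
  case 0
  show ?case by (simp add: circle_mean2_def)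
next
  case (Suc N)
  define V where "V w = (\<Sum>n<N. a (Suc n) * (\<phi> w) ^ n)" for w
  define U where "U w = \<phi> w * V w" for w
  have V: "V holomorphic_on ball 0 1" unfolding V_def by (intro holomorphic_intros holomorphic)
  have U: "U holomorphic_on ball 0 1" unfolding U_def by (intro holomorphic_intros holomorphic V)
  have eq: "(\<lambda>w. \<Sum>n<Suc N. a n * (\<phi> w) ^ n) = (\<lambda>w. a 0 + U w)"
    by (rule ext, simp only: sum.lessThan_Suc_shift) (simp add: U_def V_def sum_distrib_left algebra_simps)
  have "circle_mean2 (\<lambda>w. a 0 + U w) r = (cmod (a 0))\<^sup>2 + circle_mean2 U r"
    by (rule circle_mean2_add_const[OF U]) (use assms in \<open>auto simp: U_def\<close>)
  also have "circle_mean2 U r \<le> circle_mean2 V r"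
  proof (rule circle_mean2_mono[OF U V r])
    fix t
    have "cmod (\<phi> (of_real r * cis_turn t)) \<le> 1"
      using norm_less_1[of "of_real r * cis_turn t"] r by (simp add: norm_mult)
    thus "cmod (U (of_real r * cis_turn t)) \<le> cmod (V (of_real r * cis_turn t))"
      unfolding U_def norm_mult by (simp add: mult_left_le_one_le)
  qed
  also have "circle_mean2 V r \<le> (\<Sum>n<N. (cmod (a (Suc n)))\<^sup>2)"
    unfolding V_def by (rule Suc.IH)
  finally show ?case unfolding eq by (simp only: sum.lessThan_Suc_shift)
qed

lemma littlewood_subordination:
  assumes "\<phi> 0 = 0" and k: "k \<in> H2" and r: "0 < r" "r < 1"
  shows "circle_mean2 (\<lambda>w. k (\<phi> w)) r \<le> h2_norm2 k"
proof (rule circle_mean2_comp_le_of_trunc[OF H2_D(1)[OF k] r])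
  fix N
  have "circle_mean2 (\<lambda>w. h2_trunc k N (\<phi> w)) r \<le> (\<Sum>n<N. (cmod (h2_coeff k n))\<^sup>2)"
    unfolding h2_trunc_def by (rule littlewood_polynomial[OF assms(1) r])
  also have "\<dots> \<le> h2_norm2 k" unfolding h2_norm2_def by (rule sum_le_suminf[OF H2_D(2)[OF k]]) auto
  finally show "circle_mean2 (\<lambda>w. h2_trunc k N (\<phi> w)) r \<le> h2_norm2 k" .
qed

end

section \<open>Boundedness of composition operators\<close>

definition nat_dist :: "nat \<Rightarrow> nat \<Rightarrow> nat" where
  "nat_dist n m = (if m \<le> n then n - m else m - n)"

lemma nat_dist_commute: "nat_dist n m = nat_dist m n"
  unfolding nat_dist_def by auto

lemma sum_power_nat_dist_le:
  fixes \<rho> :: real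
  assumes "0 \<le> \<rho>" "\<rho> < 1"
  shows "(\<Sum>m<N. \<rho> ^ nat_dist n m) \<le> (1 + \<rho>) / (1 - \<rho>)"
proof -
  define A where "A = {m. m < N \<and> m \<le> n}"
  define B where "B = {m. m < N \<and> n < m}"
  have fin: "finite A" "finite B" unfolding A_def B_def by auto
  have split: "{..<N} = A \<union> B" "A \<inter> B = {}" unfolding A_def B_def by auto
  have geo: "summable (\<lambda>j. \<rho> ^ j)" "(\<Sum>j. \<rho> ^ j) = 1 / (1 - \<rho>)"
    using assms by (auto simp: summable_geometric suminf_geometric)
  have "(\<Sum>m\<in>A. \<rho> ^ nat_dist n m) = (\<Sum>j\<in>(\<lambda>m. n - m) ` A. \<rho> ^ j)"
    by (subst sum.reindex) (auto simp: inj_on_def A_def nat_dist_def intro!: sum.cong)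
  also have "\<dots> \<le> 1 / (1 - \<rho>)" unfolding geo(2)[symmetric]
    by (rule sum_le_suminf[OF geo(1)]) (use fin assms in auto)
  finally have SA: "(\<Sum>m\<in>A. \<rho> ^ nat_dist n m) \<le> 1 / (1 - \<rho>)" .
  have "(\<Sum>m\<in>B. \<rho> ^ nat_dist n m) = \<rho> * (\<Sum>j\<in>(\<lambda>m. m - n - 1) ` B. \<rho> ^ j)"
    by (subst sum.reindex)
       (auto simp: inj_on_def B_def nat_dist_def sum_distrib_left power_Suc[symmetric] Suc_diff_Suc
             intro!: sum.cong)
  also have "\<dots> \<le> \<rho> * (1 / (1 - \<rho>))" unfolding geo(2)[symmetric]
    by (intro mult_left_mono sum_le_suminf[OF geo(1)]) (use fin assms in auto)
  finally have SB: "(\<Sum>m\<in>B. \<rho> ^ nat_dist n m) \<le> \<rho> / (1 - \<rho>)" by simp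
  have "(\<Sum>m<N. \<rho> ^ nat_dist n m) = (\<Sum>m\<in>A. \<rho> ^ nat_dist n m) + (\<Sum>m\<in>B. \<rho> ^ nat_dist n m)"
    unfolding split(1) by (rule sum.union_disjoint[OF fin split(2)])
  also have "\<dots> \<le> 1 / (1 - \<rho>) + \<rho> / (1 - \<rho>)" using SA SB by simp
  finally show ?thesis by (simp add: add_divide_distrib)
qed

lemma schur_test_geometric:
  fixes \<rho> :: real and c :: "nat \<Rightarrow> complex" and T :: "nat \<Rightarrow> nat \<Rightarrow> complex"
  assumes "0 \<le> \<rho>" "\<rho> < 1" and T: "\<And>n m. cmod (T n m) \<le> \<rho> ^ nat_dist n m"
  shows "cmod (\<Sum>n<N. \<Sum>m<N. c n * cnj (c m) * T n m) \<le> (1 + \<rho>) / (1 - \<rho>) * (\<Sum>n<N. (cmod (c n))\<^sup>2)"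
proof -
  define K where "K = (1 + \<rho>) / (1 - \<rho>)"
  define h where "h n m = ((cmod (c n))\<^sup>2 / 2) * \<rho> ^ nat_dist n m" for n m
  have row: "(\<Sum>m<N. h n m) \<le> ((cmod (c n))\<^sup>2 / 2) * K" for n
    unfolding h_def sum_distrib_left[symmetric] K_def
    by (intro mult_left_mono sum_power_nat_dist_le assms) auto
  have "cmod (\<Sum>n<N. \<Sum>m<N. c n * cnj (c m) * T n m) \<le>
          (\<Sum>n<N. \<Sum>m<N. cmod (c n) * cmod (c m) * \<rho> ^ nat_dist n m)"
    by (rule order_trans[OF norm_sum sum_mono], rule order_trans[OF norm_sum sum_mono])
       (auto simp: norm_mult intro!: mult_left_mono T)
  also have "\<dots> \<le> (\<Sum>n<N. \<Sum>m<N. h n m + h m n)"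
  proof (intro sum_mono)
    fix n m
    have "cmod (c n) * cmod (c m) \<le> (cmod (c n))\<^sup>2 / 2 + (cmod (c m))\<^sup>2 / 2"
      using sum_squares_bound[of "cmod (c n)" "cmod (c m)"] by (simp add: field_simps)
    from mult_right_mono[OF this, of "\<rho> ^ nat_dist n m"]
    show "cmod (c n) * cmod (c m) * \<rho> ^ nat_dist n m \<le> h n m + h m n"
      using assms(1) by (simp add: h_def nat_dist_commute[of m n] algebra_simps)
  qed
  also have "\<dots> = (\<Sum>n<N. \<Sum>m<N. h n m) + (\<Sum>n<N. \<Sum>m<N. h m n)"
    by (simp add: sum.distrib)
  also have "(\<Sum>n<N. \<Sum>m<N. h m n) = (\<Sum>n<N. \<Sum>m<N. h n m)"
    by (rule sum.swap)
  also have "(\<Sum>n<N. \<Sum>m<N. h n m) + (\<Sum>n<N. \<Sum>m<N. h n m) \<le>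
               (\<Sum>n<N. ((cmod (c n))\<^sup>2 / 2) * K) + (\<Sum>n<N. ((cmod (c n))\<^sup>2 / 2) * K)"
    by (intro add_mono sum_mono row)
  also have "\<dots> = K * (\<Sum>n<N. (cmod (c n))\<^sup>2)"
    by (simp add: sum_distrib_left sum_distrib_right sum.distrib[symmetric] field_simps)
  finally show ?thesis unfolding K_def .
qed

lemma Moebius_function_holomorphic_on_larger_ball:
  assumes "cmod w < 1"
  obtains R where "1 < R" "Moebius_function t w holomorphic_on ball 0 R"
proof
  have "0 < 1 + cmod w" by (intro add_pos_nonneg) auto
  thus "1 < 2 / (1 + cmod w)" using assms by (simp add: less_divide_eq)
  have "1 - cnj w * z \<noteq> 0" if "cmod z < 2 / (1 + cmod w)" for z
  proof
    assume "1 - cnj w * z = 0"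
    hence "cmod w * cmod z = 1" by (metis complex_mod_cnj eq_iff_diff_eq_0 norm_mult norm_one)
    moreover have "cmod w * cmod z \<le> cmod w * (2 / (1 + cmod w))"
      using that by (intro mult_left_mono) auto
    moreover have "cmod w * (2 / (1 + cmod w)) < 1"
      using assms \<open>0 < 1 + cmod w\<close> by (simp add: divide_less_eq)
    ultimately show False by simp
  qed
  thus "Moebius_function t w holomorphic_on ball 0 (2 / (1 + cmod w))"
    unfolding Moebius_function_def by (intro holomorphic_intros) auto
qed

lemma norm_Moebius_function_eq_1:
  assumes "cmod w < 1" "cmod z = 1"
  shows "cmod (Moebius_function t w z) = 1"
proof -
  have "z * cnj z = 1" using assms(2) complex_norm_square[of z] by simp
  hence eq: "1 - cnj w * z = z * cnj (z - w)" by (simp add: algebra_simps)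
  have "cmod (1 - cnj w * z) = cmod (z - w)"
    unfolding eq norm_mult complex_mod_cnj assms(2) by simp
  moreover have "z - w \<noteq> 0" using assms by auto
  ultimately show ?thesis by (simp add: Moebius_function_def norm_mult norm_divide)
qed

text \<open>On the unit circle \<open>M\<close> is unimodular, so for \<open>m \<le> n\<close> the integrand is \<open>M\<^sup>n\<^sup>-\<^sup>m\<close>,
  whose mean over the circle is \<open>M(0)\<^sup>n\<^sup>-\<^sup>m = a\<^sup>n\<^sup>-\<^sup>m\<close>.\<close>

lemma integral_Moebius_power_cnj_power:
  assumes a: "cmod a < 1"
  defines "M \<equiv> Moebius_function 0 (- a)"
  shows "cmod (integral {0..1} (\<lambda>t. M (cis_turn t) ^ n * cnj (M (cis_turn t)) ^ m)) \<le> cmod a ^ nat_dist n m"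
proof -
  obtain R where R: "1 < R" "M holomorphic_on ball 0 R"
    using Moebius_function_holomorphic_on_larger_ball[of "- a"] a unfolding M_def by auto
  have unimodular: "M (cis_turn t) * cnj (M (cis_turn t)) = 1" for t
    using norm_Moebius_function_eq_1[of "- a" "cis_turn t" 0] a complex_norm_square[of "M (cis_turn t)"]
    by (simp add: M_def)
  have main: "integral {0..1} (\<lambda>t. M (cis_turn t) ^ n * cnj (M (cis_turn t)) ^ m) = a ^ (n - m)"
    if "m \<le> n" for n m
  proof -
    have "M (cis_turn t) ^ n * cnj (M (cis_turn t)) ^ m = M (cis_turn t) ^ (n - m)" for t
    proof -
      have "M (cis_turn t) ^ n = M (cis_turn t) ^ (n - m) * M (cis_turn t) ^ m"
        using that by (simp add: power_add[symmetric])
      thus ?thesis by (simp add: mult.assoc power_mult_distrib[symmetric] unimodular)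
    qed
    moreover have "((\<lambda>t. M (of_real 1 * cis_turn t) ^ (n - m) * cnj (cis_turn t) ^ 0) has_integral
                      (of_real 1 ^ 0 * h2_coeff (\<lambda>w. M w ^ (n - m)) 0)) {0..1}"
      by (rule h2_coeff_circle_integral) (use R in \<open>auto intro!: holomorphic_intros\<close>)
    moreover have "M 0 = a" by (simp add: M_def Moebius_function_of_zero)
    ultimately show ?thesis by (simp add: h2_coeff_0 integral_unique)
  qed
  show ?thesis
  proof (cases "m \<le> n")
    case True thus ?thesis by (simp add: main nat_dist_def norm_power)
  next
    case False
    have "integral {0..1} (\<lambda>t. M (cis_turn t) ^ n * cnj (M (cis_turn t)) ^ m) =
          cnj (integral {0..1} (\<lambda>t. M (cis_turn t) ^ m * cnj (M (cis_turn t)) ^ n))"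
      by (simp add: integral_cnj mult.commute)
    thus ?thesis using False by (simp add: main nat_dist_def norm_power)
  qed
qed

lemma circle_mean2_1_Moebius_polynomial:
  assumes a: "cmod a < 1"
  defines "M \<equiv> Moebius_function 0 (- a)"
  shows "of_real (circle_mean2 (\<lambda>w. \<Sum>n<N. c n * M w ^ n) 1) = (\<Sum>n<N. \<Sum>m<N. c n * cnj (c m) *
           integral {0..1} (\<lambda>t. M (cis_turn t) ^ n * cnj (M (cis_turn t)) ^ m))"
proof -
  obtain R' where R': "1 < R'" "M holomorphic_on ball 0 R'"
    using Moebius_function_holomorphic_on_larger_ball[of "- a"] a unfolding M_def by auto
  define k where "k = (\<lambda>w. \<Sum>n<N. c n * M w ^ n)"
  have k: "k holomorphic_on ball 0 R'" unfolding k_def by (intro holomorphic_intros R'(2)[unfolded o_def])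
  define G where "G n m t = c n * cnj (c m) * (M (cis_turn t) ^ n * cnj (M (cis_turn t)) ^ m)" for n m t
  have expand: "complex_of_real ((cmod (k (of_real 1 * cis_turn t)))\<^sup>2) = (\<Sum>n<N. \<Sum>m<N. G n m t)" for t
  proof -
    have "complex_of_real ((cmod (k (cis_turn t)))\<^sup>2) = k (cis_turn t) * cnj (k (cis_turn t))"
      by (rule complex_norm_square)
    also have "\<dots> = (\<Sum>n<N. \<Sum>m<N. G n m t)"
      by (simp add: k_def cnj_sum sum_product G_def algebra_simps)
    finally show ?thesis by simp
  qed
  have "(G n m has_integral (c n * cnj (c m) *
          integral {0..1} (\<lambda>t. M (cis_turn t) ^ n * cnj (M (cis_turn t)) ^ m))) {0..1}" for n m
  proof -
    have "(\<lambda>t. M (cis_turn t) ^ n * cnj (M (cis_turn t)) ^ m) integrable_on {0..1}"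
      using continuous_on_circle_comp[OF R'(2), of 1] R'(1)
      by (intro integrable_continuous_real continuous_intros) auto
    from has_integral_mult_right[OF integrable_integral[OF this], of "c n * cnj (c m)"]
    show ?thesis unfolding G_def .
  qed
  hence "((\<lambda>t. complex_of_real ((cmod (k (of_real 1 * cis_turn t)))\<^sup>2)) has_integral
           (\<Sum>n<N. \<Sum>m<N. c n * cnj (c m) *
              integral {0..1} (\<lambda>t. M (cis_turn t) ^ n * cnj (M (cis_turn t)) ^ m))) {0..1}"
    unfolding expand by (intro has_integral_sum) auto
  moreover have "((\<lambda>t. complex_of_real ((cmod (k (of_real 1 * cis_turn t)))\<^sup>2)) has_integral
                   of_real (circle_mean2 k 1)) {0..1}"
    using k R' by (intro has_integral_of_real has_integral_circle_mean2) auto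
  ultimately show ?thesis unfolding k_def by (rule has_integral_unique[symmetric])
qed

lemma Moebius_polynomial_H2:
  fixes c :: "nat \<Rightarrow> complex" and N :: nat
  assumes a: "cmod a < 1"
  defines "k \<equiv> (\<lambda>w. \<Sum>n<N. c n * Moebius_function 0 (- a) w ^ n)"
  shows "k \<in> H2" "h2_norm2 k \<le> (1 + cmod a) / (1 - cmod a) * (\<Sum>n<N. (cmod (c n))\<^sup>2)"
proof -
  obtain R where R: "1 < R" "Moebius_function 0 (- a) holomorphic_on ball 0 R"
    using Moebius_function_holomorphic_on_larger_ball[of "- a"] a by auto
  have k: "k holomorphic_on ball 0 R" unfolding k_def by (intro holomorphic_intros R(2)[unfolded o_def])
  have "(\<lambda>n. (cmod (h2_coeff k n))\<^sup>2 * 1 ^ (2 * n)) sums circle_mean2 k 1"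
    by (rule circle_mean2_sums[OF k]) (use R in auto)
  hence summable: "summable (\<lambda>n. (cmod (h2_coeff k n))\<^sup>2)" and norm: "h2_norm2 k = circle_mean2 k 1"
    by (auto simp: sums_iff h2_norm2_def)
  have "k holomorphic_on ball 0 1" by (rule holomorphic_on_subset[OF k]) (use R in auto)
  thus "k \<in> H2" unfolding H2_def using summable by auto
  have "h2_norm2 k \<le> cmod (complex_of_real (circle_mean2 k 1))" unfolding norm by simp
  also have "\<dots> \<le> (1 + cmod a) / (1 - cmod a) * (\<Sum>n<N. (cmod (c n))\<^sup>2)"
    unfolding k_def circle_mean2_1_Moebius_polynomial[OF a]
    by (rule schur_test_geometric) (use a integral_Moebius_power_cnj_power[OF a] in auto)
  finally show "h2_norm2 k \<le> (1 + cmod a) / (1 - cmod a) * (\<Sum>n<N. (cmod (c n))\<^sup>2)" .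
qed

context disc_selfmap
begin

definition comp_bound :: real where
  "comp_bound = (1 + cmod (\<phi> 0)) / (1 - cmod (\<phi> 0))"

lemma comp_bound_nonneg: "0 \<le> comp_bound"
  using norm_less_1[of 0] unfolding comp_bound_def by simp

text \<open>Write \<open>\<phi> = M \<circ> \<psi>\<close> with \<open>\<psi>(0) = 0\<close> and \<open>M\<close> a disc automorphism: Littlewood handles \<open>\<psi>\<close>,
  and the estimate for polynomials in \<open>M\<close> handles \<open>M\<close>.\<close>

theorem comp_H2:
  assumes h: "h \<in> H2"
  shows "(\<lambda>w. h (\<phi> w)) \<in> H2" "h2_norm2 (\<lambda>w. h (\<phi> w)) \<le> comp_bound * h2_norm2 h"
proof -
  define a where "a = \<phi> 0"
  have a: "cmod a < 1" unfolding a_def using norm_less_1[of 0] by simp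
  define \<psi> where "\<psi> w = Moebius_function 0 a (\<phi> w)" for w
  interpret \<psi>: disc_selfmap \<psi>
  proof
    show "\<psi> holomorphic_on ball 0 1"
      unfolding \<psi>_def by (rule holomorphic_on_comp[OF Moebius_function_holomorphic[OF a]])
    show "cmod (\<psi> w) < 1" if "cmod w < 1" for w
      unfolding \<psi>_def by (rule Moebius_function_norm_lt_1[OF a norm_less_1[OF that]])
  qed
  have \<psi>0: "\<psi> 0 = 0" unfolding \<psi>_def a_def by (simp add: Moebius_function_eq_zero)
  have bound: "circle_mean2 (\<lambda>w. h (\<phi> w)) r \<le> comp_bound * h2_norm2 h" if r: "0 < r" "r < 1" for r
  proof (rule circle_mean2_comp_le_of_trunc[OF H2_D(1)[OF h] r])
    fix N
    define k where "k = (\<lambda>w. \<Sum>n<N. h2_coeff h n * Moebius_function 0 (- a) w ^ n)"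
    have "circle_mean2 (\<lambda>w. h2_trunc h N (\<phi> w)) r = circle_mean2 (\<lambda>w. k (\<psi> w)) r"
      using Moebius_function_compose[of "- a" a] a norm_less_1
      by (intro circle_mean2_cong[OF _ r]) (simp add: k_def \<psi>_def h2_trunc_def)
    also have "\<dots> \<le> h2_norm2 k"
      by (rule \<psi>.littlewood_subordination[OF \<psi>0 _ r]) (use Moebius_polynomial_H2(1)[OF a] in \<open>simp add: k_def\<close>)
    also have "\<dots> \<le> comp_bound * (\<Sum>n<N. (cmod (h2_coeff h n))\<^sup>2)"
      using Moebius_polynomial_H2(2)[OF a] by (simp add: k_def comp_bound_def a_def)
    also have "\<dots> \<le> comp_bound * h2_norm2 h" unfolding h2_norm2_def
      by (intro mult_left_mono[OF _ comp_bound_nonneg] sum_le_suminf[OF H2_D(2)[OF h]]) auto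
    finally show "circle_mean2 (\<lambda>w. h2_trunc h N (\<phi> w)) r \<le> comp_bound * h2_norm2 h" .
  qed
  show "(\<lambda>w. h (\<phi> w)) \<in> H2" "h2_norm2 (\<lambda>w. h (\<phi> w)) \<le> comp_bound * h2_norm2 h"
    using H2_if_circle_mean2_bounded[OF holomorphic_on_comp[OF H2_D(1)[OF h]] bound] by auto
qed

end

lemma cauchy_schwarz_suminf:
  fixes a b :: "nat \<Rightarrow> complex"
  assumes A: "summable (\<lambda>n. (cmod (a n))\<^sup>2)" and B: "summable (\<lambda>n. (cmod (b n))\<^sup>2)"
  shows "summable (\<lambda>n. a n * cnj (b n))"
    "cmod (\<Sum>n. a n * cnj (b n)) \<le> sqrt (\<Sum>n. (cmod (a n))\<^sup>2) * sqrt (\<Sum>n. (cmod (b n))\<^sup>2)"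
proof -
  have "norm (a n * cnj (b n)) \<le> ((cmod (a n))\<^sup>2 + (cmod (b n))\<^sup>2) / 2" for n
    using sum_squares_bound[of "cmod (a n)" "cmod (b n)"] by (simp add: norm_mult)
  hence sn: "summable (\<lambda>n. norm (a n * cnj (b n)))"
    by (intro summable_comparison_test[OF _ summable_divide[OF summable_add[OF A B], of 2]]) auto
  thus "summable (\<lambda>n. a n * cnj (b n))" by (rule summable_norm_cancel)
  have "cmod (\<Sum>n. a n * cnj (b n)) \<le> (\<Sum>n. norm (a n * cnj (b n)))" by (rule summable_norm[OF sn])
  also have "\<dots> \<le> sqrt (\<Sum>n. (cmod (a n))\<^sup>2) * sqrt (\<Sum>n. (cmod (b n))\<^sup>2)"
  proof (rule suminf_le_const[OF sn])
    fix N
    have "(\<Sum>n<N. norm (a n * cnj (b n))) \<le> sqrt ((\<Sum>n<N. (cmod (a n))\<^sup>2) * (\<Sum>n<N. (cmod (b n))\<^sup>2))"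
      using Cauchy_Schwarz_ineq_sum[of "\<lambda>n. cmod (a n)" "\<lambda>n. cmod (b n)" "{..<N}"]
      by (intro real_le_rsqrt) (auto simp: norm_mult)
    also have "\<dots> \<le> sqrt ((\<Sum>n. (cmod (a n))\<^sup>2) * (\<Sum>n. (cmod (b n))\<^sup>2))"
      by (intro real_sqrt_le_mono mult_mono sum_le_suminf A B) (auto intro: sum_nonneg suminf_nonneg A B)
    finally show "(\<Sum>n<N. norm (a n * cnj (b n))) \<le> sqrt (\<Sum>n. (cmod (a n))\<^sup>2) * sqrt (\<Sum>n. (cmod (b n))\<^sup>2)"
      by (simp add: real_sqrt_mult)
  qed
  finally show "cmod (\<Sum>n. a n * cnj (b n)) \<le> sqrt (\<Sum>n. (cmod (a n))\<^sup>2) * sqrt (\<Sum>n. (cmod (b n))\<^sup>2)" .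
qed

lemma summable_h2_inner: "u \<in> H2 \<Longrightarrow> v \<in> H2 \<Longrightarrow> summable (\<lambda>n. h2_coeff u n * cnj (h2_coeff v n))"
  using cauchy_schwarz_suminf(1)[OF H2_D(2) H2_D(2)] .

lemma norm_h2_inner_le:
  "u \<in> H2 \<Longrightarrow> v \<in> H2 \<Longrightarrow> cmod (h2_inner u v) \<le> sqrt (h2_norm2 u) * sqrt (h2_norm2 v)"
  unfolding h2_inner_def h2_norm2_def using cauchy_schwarz_suminf(2)[OF H2_D(2) H2_D(2)] .

lemma h2_inner_diff_left:
  assumes "u \<in> H2" "v \<in> H2" "f \<in> H2"
  shows "h2_inner (\<lambda>w. u w - v w) f = h2_inner u f - h2_inner v f"
  unfolding h2_inner_def h2_coeff_diff[OF H2_D(1)[OF assms(1)] H2_D(1)[OF assms(2)]]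
  using suminf_diff[OF summable_h2_inner[OF assms(1,3)] summable_h2_inner[OF assms(2,3)]]
  by (simp add: left_diff_distrib)

lemma h2_inner_monomial_left: "h2_inner (\<lambda>w. w ^ m) g = cnj (h2_coeff g m)"
proof -
  have "(\<lambda>n. h2_coeff (\<lambda>w. w ^ m) n * cnj (h2_coeff g n)) = (\<lambda>n. if n = m then cnj (h2_coeff g n) else 0)"
    by (rule ext) (simp add: h2_coeff_monomial)
  thus ?thesis unfolding h2_inner_def using sums_single[of m "\<lambda>n. cnj (h2_coeff g n)"]
    by (simp add: sums_iff)
qed

lemma polynomial_H2:
  "(\<lambda>w. \<Sum>n<N. c n * w ^ n) \<in> H2"
  "h2_norm2 (\<lambda>w. \<Sum>n<N. c n * w ^ n) = (\<Sum>n<N. (cmod (c n))\<^sup>2)"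
proof -
  have sq: "(\<lambda>m. (cmod (h2_coeff (\<lambda>w. \<Sum>n<N. c n * w ^ n) m))\<^sup>2) = (\<lambda>m. if m < N then (cmod (c m))\<^sup>2 else 0)"
    by (rule ext) (simp add: h2_coeff_polynomial)
  have "summable (\<lambda>m. if m < N then (cmod (c m))\<^sup>2 else 0)"
    by (rule summable_finite[of "{..<N}"]) auto
  moreover have "(\<lambda>w. \<Sum>n<N. c n * w ^ n) holomorphic_on ball 0 1" by (intro holomorphic_intros)
  ultimately show "(\<lambda>w. \<Sum>n<N. c n * w ^ n) \<in> H2" unfolding H2_def by (simp add: sq)
  show "h2_norm2 (\<lambda>w. \<Sum>n<N. c n * w ^ n) = (\<Sum>n<N. (cmod (c n))\<^sup>2)"
    unfolding h2_norm2_def sq by (subst suminf_finite[of "{..<N}"]) auto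
qed

lemma monomial_H2: "(\<lambda>w. w ^ m) \<in> H2"
proof -
  have "(\<lambda>n. (cmod (h2_coeff (\<lambda>w. w ^ m) n))\<^sup>2) = (\<lambda>n. if n = m then 1 else 0)"
    by (rule ext) (simp add: h2_coeff_monomial)
  moreover have "(\<lambda>w. w ^ m) holomorphic_on ball 0 1" by (intro holomorphic_intros)
  ultimately show ?thesis unfolding H2_def using summable_single[of m "\<lambda>n. 1::real"] by simp
qed

definition h2_kernel :: "complex \<Rightarrow> complex \<Rightarrow> complex" where
  "h2_kernel z w = 1 / (1 - cnj z * w)"

lemma h2_coeff_h2_kernel:
  assumes "cmod z < 1" shows "h2_coeff (h2_kernel z) n = cnj z ^ n"
proof (rule h2_coeff_power_series[of 1])
  fix w :: complex assume "cmod w < 1"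
  hence "cmod (cnj z * w) < 1" using norm_mult_less[of "cnj z" 1 w 1] assms by simp
  from geometric_sums[OF this] show "(\<lambda>n. cnj z ^ n * w ^ n) sums h2_kernel z w"
    by (simp add: h2_kernel_def power_mult_distrib)
qed simp

lemma h2_kernel_H2:
  assumes "cmod z < 1" shows "h2_kernel z \<in> H2"
proof -
  have "h2_kernel z holomorphic_on ball 0 1"
    unfolding h2_kernel_def[abs_def]
  proof (intro holomorphic_intros)
    fix w :: complex assume "w \<in> ball 0 1"
    hence "cmod (cnj z * w) < 1" using norm_mult_less[of "cnj z" 1 w 1] assms by simp
    thus "1 - cnj z * w \<noteq> 0" by auto
  qed
  moreover have "summable (\<lambda>n. (cmod z)\<^sup>2 ^ n)" using assms
    by (intro summable_geometric) (simp add: abs_square_less_1)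
  moreover have "(cmod (h2_coeff (h2_kernel z) n))\<^sup>2 = (cmod z)\<^sup>2 ^ n" for n
    unfolding h2_coeff_h2_kernel[OF assms] by (simp add: norm_power power_mult[symmetric] mult.commute)
  ultimately show ?thesis unfolding H2_def by simp
qed

lemma h2_trunc_H2: "h2_trunc u N \<in> H2"
  unfolding h2_trunc_def[abs_def] by (rule polynomial_H2(1))

lemma h2_trunc_tail_H2:
  assumes "u \<in> H2"
  shows "(\<lambda>w. u w - h2_trunc u N w) \<in> H2"
    "h2_norm2 (\<lambda>w. u w - h2_trunc u N w) = h2_norm2 u - (\<Sum>m<N. (cmod (h2_coeff u m))\<^sup>2)"
proof -
  have sm: "summable (\<lambda>m. (cmod (h2_coeff u m))\<^sup>2)" by (rule H2_D(2)[OF assms])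
  have trunc: "h2_trunc u N holomorphic_on ball 0 1"
    unfolding h2_trunc_def[abs_def] by (intro holomorphic_intros)
  have "h2_coeff (\<lambda>w. u w - h2_trunc u N w) m = (if m < N then 0 else h2_coeff u m)" for m
    unfolding h2_coeff_diff[OF H2_D(1)[OF assms] trunc] by (simp add: h2_trunc_def[abs_def] h2_coeff_polynomial)
  hence sq: "(\<lambda>m. (cmod (h2_coeff (\<lambda>w. u w - h2_trunc u N w) m))\<^sup>2) =
              (\<lambda>m. (cmod (h2_coeff u m))\<^sup>2 - (if m < N then (cmod (h2_coeff u m))\<^sup>2 else 0))"
    by auto
  have finite: "summable (\<lambda>m. if m < N then (cmod (h2_coeff u m))\<^sup>2 else 0)"
    by (rule summable_finite[of "{..<N}"]) auto
  have "(\<lambda>w. u w - h2_trunc u N w) holomorphic_on ball 0 1"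
    by (intro holomorphic_intros H2_D(1)[OF assms] trunc)
  thus "(\<lambda>w. u w - h2_trunc u N w) \<in> H2" unfolding H2_def using summable_diff[OF sm finite] sq by simp
  have "(\<Sum>m. if m < N then (cmod (h2_coeff u m))\<^sup>2 else 0) = (\<Sum>m<N. (cmod (h2_coeff u m))\<^sup>2)"
    by (subst suminf_finite[of "{..<N}"]) auto
  thus "h2_norm2 (\<lambda>w. u w - h2_trunc u N w) = h2_norm2 u - (\<Sum>m<N. (cmod (h2_coeff u m))\<^sup>2)"
    unfolding h2_norm2_def sq using suminf_diff[OF sm finite] by simp
qed

lemma h2_trunc_tail_tendsto_0:
  assumes "u \<in> H2" shows "(\<lambda>N. h2_norm2 (\<lambda>w. u w - h2_trunc u N w)) \<longlonglongrightarrow> 0"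
proof -
  have "(\<lambda>N. h2_norm2 u - (\<Sum>m<N. (cmod (h2_coeff u m))\<^sup>2)) \<longlonglongrightarrow> h2_norm2 u - h2_norm2 u"
    unfolding h2_norm2_def by (intro tendsto_intros summable_LIMSEQ H2_D(2)[OF assms])
  thus ?thesis unfolding h2_trunc_tail_H2(2)[OF assms] by simp
qed

lemma summable_power_series_if_square_summable:
  assumes "summable (\<lambda>n. (cmod (a n))\<^sup>2)" "cmod w < 1"
  shows "summable (\<lambda>n. a n * w ^ n)"
proof -
  have geo: "summable (\<lambda>n. ((cmod w)\<^sup>2) ^ n)" using assms(2)
    by (intro summable_geometric) (simp add: abs_square_less_1)
  have "norm (norm (a n * w ^ n)) \<le> ((cmod (a n))\<^sup>2 + ((cmod w)\<^sup>2) ^ n) / 2" for n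
    using sum_squares_bound[of "cmod (a n)" "cmod w ^ n"]
    by (simp add: norm_mult norm_power power_mult[symmetric] ac_simps)
  hence "summable (\<lambda>n. norm (a n * w ^ n))"
    by (intro summable_comparison_test[OF _ summable_divide[OF summable_add[OF assms(1) geo], of 2]]) auto
  thus ?thesis by (rule summable_norm_cancel)
qed

section \<open>The adjoint of a composition operator\<close>

context disc_selfmap
begin

lemma power_comp_H2: "(\<lambda>w. (\<phi> w) ^ n) \<in> H2"
  using comp_H2(1)[OF monomial_H2[of n]] .

lemma norm_h2_inner_comp_le:
  assumes "h \<in> H2" "f \<in> H2"
  shows "cmod (h2_inner (\<lambda>w. h (\<phi> w)) f) \<le> sqrt (comp_bound * h2_norm2 h) * sqrt (h2_norm2 f)"
proof -
  have "cmod (h2_inner (\<lambda>w. h (\<phi> w)) f) \<le> sqrt (h2_norm2 (\<lambda>w. h (\<phi> w))) * sqrt (h2_norm2 f)"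
    by (rule norm_h2_inner_le[OF comp_H2(1)[OF assms(1)] assms(2)])
  also have "\<dots> \<le> sqrt (comp_bound * h2_norm2 h) * sqrt (h2_norm2 f)"
    by (intro mult_right_mono real_sqrt_le_mono comp_H2(2) assms) (auto intro: h2_norm2_nonneg assms)
  finally show ?thesis .
qed

lemma h2_inner_comp_polynomial:
  assumes f: "f \<in> H2"
  shows "h2_inner (\<lambda>w. \<Sum>n<N. c n * (\<phi> w) ^ n) f = (\<Sum>n<N. c n * h2_inner (\<lambda>w. (\<phi> w) ^ n) f)"
proof -
  have coeff: "h2_coeff (\<lambda>w. \<Sum>n\<in>{..<N}. c n * (\<phi> w) ^ n) m =
                 (\<Sum>n\<in>{..<N}. c n * h2_coeff (\<lambda>w. (\<phi> w) ^ n) m)" for m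
    by (rule h2_coeff_sum) (auto intro: holomorphic_intros holomorphic)
  have "h2_inner (\<lambda>w. \<Sum>n<N. c n * (\<phi> w) ^ n) f =
        (\<Sum>m. \<Sum>n<N. c n * (h2_coeff (\<lambda>w. (\<phi> w) ^ n) m * cnj (h2_coeff f m)))"
    unfolding h2_inner_def coeff by (simp add: sum_distrib_right mult.assoc)
  also have "\<dots> = (\<Sum>n<N. \<Sum>m. c n * (h2_coeff (\<lambda>w. (\<phi> w) ^ n) m * cnj (h2_coeff f m)))"
    by (rule suminf_sum) (intro summable_mult summable_h2_inner power_comp_H2 f)
  also have "\<dots> = (\<Sum>n<N. c n * h2_inner (\<lambda>w. (\<phi> w) ^ n) f)"
    unfolding h2_inner_def by (intro sum.cong refl suminf_mult summable_h2_inner power_comp_H2 f)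
  finally show ?thesis .
qed

text \<open>The adjoint is built from its Taylor coefficients \<open>\<langle>w\<^sup>n, C\<^sub>\<phi>\<^sup>* f\<rangle> = \<langle>\<phi>\<^sup>n, f\<rangle>\<close>.\<close>

definition adj_coeff :: "(complex \<Rightarrow> complex) \<Rightarrow> nat \<Rightarrow> complex" where
  "adj_coeff f n = cnj (h2_inner (\<lambda>w. (\<phi> w) ^ n) f)"

definition adj_fun :: "(complex \<Rightarrow> complex) \<Rightarrow> complex \<Rightarrow> complex" where
  "adj_fun f w = (if cmod w < 1 then (\<Sum>n. adj_coeff f n * w ^ n) else 0)"

text \<open>For a partial sum \<open>S\<close> of the series, pairing \<open>f\<close> with \<open>P \<circ> \<phi>\<close>, where \<open>P\<close> is the
  polynomial with the same coefficients, gives \<open>S \<le> sqrt (comp_bound * S) * sqrt (h2_norm2 f)\<close>.\<close>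

lemma summable_adj_coeff:
  assumes f: "f \<in> H2"
  shows "summable (\<lambda>n. (cmod (adj_coeff f n))\<^sup>2)"
proof (rule summableI_nonneg_bounded)
  fix N
  define S where "S = (\<Sum>n<N. (cmod (adj_coeff f n))\<^sup>2)"
  define P where "P = (\<lambda>u. \<Sum>n<N. adj_coeff f n * u ^ n)"
  have S0: "0 \<le> S" unfolding S_def by (auto intro: sum_nonneg)
  have "h2_inner (\<lambda>w. P (\<phi> w)) f = (\<Sum>n<N. adj_coeff f n * cnj (adj_coeff f n))"
    unfolding P_def h2_inner_comp_polynomial[OF f] by (simp add: adj_coeff_def)
  also have "\<dots> = of_real S" unfolding S_def of_real_sum complex_norm_square ..
  finally have "S = cmod (h2_inner (\<lambda>w. P (\<phi> w)) f)" using S0 by simp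
  also have "\<dots> \<le> sqrt (comp_bound * h2_norm2 P) * sqrt (h2_norm2 f)"
    unfolding P_def by (rule norm_h2_inner_comp_le[OF polynomial_H2(1) f])
  also have "\<dots> = sqrt (comp_bound * S) * sqrt (h2_norm2 f)" unfolding P_def polynomial_H2(2) S_def ..
  finally have le: "S \<le> sqrt (comp_bound * S) * sqrt (h2_norm2 f)" .
  have "S * S \<le> (sqrt (comp_bound * S) * sqrt (h2_norm2 f))\<^sup>2"
    using le S0 by (simp add: power2_eq_square mult_mono)
  also have "\<dots> = (comp_bound * h2_norm2 f) * S"
    using comp_bound_nonneg S0 h2_norm2_nonneg[OF f] by (simp add: power_mult_distrib)
  finally have "S \<le> comp_bound * h2_norm2 f"
    using S0 by (cases "S = 0") (auto simp: comp_bound_nonneg h2_norm2_nonneg[OF f])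
  thus "(\<Sum>n<N. (cmod (adj_coeff f n))\<^sup>2) \<le> comp_bound * h2_norm2 f" unfolding S_def .
qed simp

lemma adj_fun_sums:
  assumes "f \<in> H2" "cmod w < 1"
  shows "(\<lambda>n. adj_coeff f n * w ^ n) sums adj_fun f w"
  using summable_power_series_if_square_summable[OF summable_adj_coeff[OF assms(1)] assms(2)] assms(2)
  unfolding adj_fun_def by (simp add: summable_sums)

lemma adj_fun_holomorphic:
  assumes f: "f \<in> H2" shows "adj_fun f holomorphic_on ball 0 1"
proof -
  have "(\<lambda>w. \<Sum>n. adj_coeff f n * w ^ n) holomorphic_on ball 0 1"
    unfolding holomorphic_on_open[OF open_ball]
  proof
    fix x :: complex assume "x \<in> ball 0 1"
    hence "norm x < 1" by simp
    from termdiffs_strong'[of 1 "adj_coeff f",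
           OF summable_power_series_if_square_summable[OF summable_adj_coeff[OF f]] this]
    show "\<exists>f'. ((\<lambda>w. \<Sum>n. adj_coeff f n * w ^ n) has_field_derivative f') (at x)" by blast
  qed
  thus ?thesis by (rule holomorphic_transform) (simp add: adj_fun_def)
qed

lemma h2_coeff_adj_fun: "f \<in> H2 \<Longrightarrow> h2_coeff (adj_fun f) n = adj_coeff f n"
  by (rule h2_coeff_power_series[of 1]) (auto intro: adj_fun_sums)

lemma adj_fun_H2: "f \<in> H2 \<Longrightarrow> adj_fun f \<in> H2"
  using adj_fun_holomorphic summable_adj_coeff h2_coeff_adj_fun by (simp add: H2_def)

lemma adj_fun_outside: "1 \<le> cmod w \<Longrightarrow> adj_fun f w = 0"
  unfolding adj_fun_def by simp

text \<open>The identity holds for Taylor polynomials by linearity, and passes to the limit because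
  composition with \<open>\<phi>\<close> is bounded.\<close>

lemma h2_inner_comp_eq_adj:
  assumes f: "f \<in> H2" and h: "h \<in> H2"
  shows "h2_inner (\<lambda>w. h (\<phi> w)) f = h2_inner h (adj_fun f)"
proof -
  define A where "A N = h2_inner (\<lambda>w. h2_trunc h N (\<phi> w)) f" for N
  have A: "A N = (\<Sum>n<N. h2_coeff h n * cnj (adj_coeff f n))" for N
    unfolding A_def h2_trunc_def h2_inner_comp_polynomial[OF f] adj_coeff_def by simp
  have lim_A: "A \<longlonglongrightarrow> h2_inner h (adj_fun f)"
    unfolding A h2_inner_def h2_coeff_adj_fun[OF f, symmetric]
    by (intro summable_LIMSEQ summable_h2_inner h adj_fun_H2 f)
  have "(\<lambda>N. h2_inner (\<lambda>w. h (\<phi> w)) f - A N) \<longlonglongrightarrow> 0"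
  proof (rule Lim_null_comparison)
    show "\<forall>\<^sub>F N in sequentially. norm (h2_inner (\<lambda>w. h (\<phi> w)) f - A N) \<le>
            sqrt (comp_bound * h2_norm2 (\<lambda>w. h w - h2_trunc h N w)) * sqrt (h2_norm2 f)"
    proof (intro always_eventually allI)
      fix N
      have "h2_inner (\<lambda>w. h (\<phi> w)) f - A N = h2_inner (\<lambda>w. (\<lambda>u. h u - h2_trunc h N u) (\<phi> w)) f"
        unfolding A_def by (simp add: h2_inner_diff_left[OF comp_H2(1)[OF h] comp_H2(1)[OF h2_trunc_H2] f])
      also have "cmod \<dots> \<le> sqrt (comp_bound * h2_norm2 (\<lambda>w. h w - h2_trunc h N w)) * sqrt (h2_norm2 f)"
        by (rule norm_h2_inner_comp_le[OF h2_trunc_tail_H2(1)[OF h] f])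
      finally show "norm (h2_inner (\<lambda>w. h (\<phi> w)) f - A N) \<le>
                      sqrt (comp_bound * h2_norm2 (\<lambda>w. h w - h2_trunc h N w)) * sqrt (h2_norm2 f)"
        by simp
    qed
    show "(\<lambda>N. sqrt (comp_bound * h2_norm2 (\<lambda>w. h w - h2_trunc h N w)) * sqrt (h2_norm2 f)) \<longlonglongrightarrow> 0"
      using tendsto_mult[OF tendsto_real_sqrt[OF tendsto_mult[OF tendsto_const h2_trunc_tail_tendsto_0[OF h]]]
              tendsto_const, of comp_bound "sqrt (h2_norm2 f)"]
      by simp
  qed
  hence "(\<lambda>N. h2_inner (\<lambda>w. h (\<phi> w)) f - (h2_inner (\<lambda>w. h (\<phi> w)) f - A N)) \<longlonglongrightarrow>
           h2_inner (\<lambda>w. h (\<phi> w)) f - 0"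
    by (intro tendsto_intros)
  hence "A \<longlonglongrightarrow> h2_inner (\<lambda>w. h (\<phi> w)) f" by simp
  from LIMSEQ_unique[OF this lim_A] show ?thesis .
qed

lemma adj_fun_unique:
  assumes f: "f \<in> H2" and G: "G \<in> H2" "\<forall>w. 1 \<le> cmod w \<longrightarrow> G w = 0"
    and adj: "\<forall>h\<in>H2. h2_inner (\<lambda>w. h (\<phi> w)) f = h2_inner h G"
  shows "G = adj_fun f"
proof
  fix w
  have coeff: "h2_coeff G n = adj_coeff f n" for n
  proof -
    have "h2_inner (\<lambda>w. (\<phi> w) ^ n) f = h2_inner (\<lambda>w. w ^ n) G" using adj monomial_H2[of n] by auto
    thus ?thesis unfolding adj_coeff_def h2_inner_monomial_left by simp
  qed
  show "G w = adj_fun f w"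
  proof (cases "cmod w < 1")
    case True
    have "(\<lambda>n. h2_coeff G n * w ^ n) sums G w" by (rule h2_coeff_sums[OF H2_D(1)[OF G(1)] True])
    thus ?thesis using adj_fun_sums[OF f True] unfolding coeff using sums_unique2 by blast
  next
    case False thus ?thesis using G(2) adj_fun_outside by simp
  qed
qed

lemma adj_fun_eq_kernel:
  assumes f: "f \<in> H2" and z: "cmod z < 1"
  shows "adj_fun f z = cnj (h2_inner (\<lambda>w. h2_kernel z (\<phi> w)) f)"
proof -
  have "h2_inner (\<lambda>w. h2_kernel z (\<phi> w)) f = h2_inner (h2_kernel z) (adj_fun f)"
    by (rule h2_inner_comp_eq_adj[OF f h2_kernel_H2[OF z]])
  also have "\<dots> = (\<Sum>n. cnj (adj_coeff f n * z ^ n))"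
    unfolding h2_inner_def h2_coeff_h2_kernel[OF z] h2_coeff_adj_fun[OF f] by (simp add: mult.commute)
  also have "\<dots> = cnj (adj_fun f z)"
    using adj_fun_sums[OF f z] sums_cnj[of "\<lambda>n. adj_coeff f n * z ^ n" "adj_fun f z"] by (simp add: sums_iff)
  finally show ?thesis by simp
qed

lemma adj_fun_0: "f \<in> H2 \<Longrightarrow> adj_fun f 0 = f 0"
  using h2_coeff_adj_fun[of f 0] h2_inner_monomial_left[of 0 f]
  by (simp add: h2_coeff_0 adj_coeff_def)

end

section \<open>Contour integrals of quotients by polynomials with simple roots\<close>

lemma residue_div_poly_simple_root:
  assumes "open A" "w \<in> A" "g holomorphic_on A" "poly S w = 0" "poly (pderiv S) w \<noteq> 0"
  shows "residue (\<lambda>u. g u / poly S u) w = g w / poly (pderiv S) w"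
proof -
  obtain S1 where S: "S = [:-w, 1:] * S1"
    using assms(4) poly_eq_0_iff_dvd by (metis dvdE)
  have poly_S: "poly S u = (u - w) * poly S1 u" for u unfolding S by (simp add: algebra_simps)
  have S1w: "poly (pderiv S) w = poly S1 w" unfolding S pderiv_mult by (simp add: pderiv_pCons)
  have "residue (\<lambda>u. (g u / poly S1 u) / (u - w)) w = g w / poly S1 w"
  proof (rule residue_simple)
    show "open (A \<inter> {u. poly S1 u \<noteq> 0})"
      by (intro open_Int assms(1) open_Collect_neq) (auto intro: continuous_intros)
    show "w \<in> A \<inter> {u. poly S1 u \<noteq> 0}" using assms(2,5) S1w by simp
    show "(\<lambda>u. g u / poly S1 u) holomorphic_on A \<inter> {u. poly S1 u \<noteq> 0}"
      by (intro holomorphic_intros holomorphic_on_subset[OF assms(3)]) auto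
  qed
  thus ?thesis unfolding poly_S S1w by (simp add: divide_divide_eq_left mult.commute)
qed

lemma contour_integral_circlepath_div_poly:
  assumes g: "g holomorphic_on ball 0 R" and r: "0 < r" "r < R" and S: "S \<noteq> 0"
    and roots: "\<And>w. poly S w = 0 \<Longrightarrow> cmod w < r"
    and simple: "\<And>w. poly S w = 0 \<Longrightarrow> poly (pderiv S) w \<noteq> 0"
  shows "contour_integral (circlepath 0 r) (\<lambda>u. g u / poly S u) =
           2 * pi * \<i> * (\<Sum>w\<in>{w. poly S w = 0}. g w / poly (pderiv S) w)"
proof -
  define Z where "Z = {w. poly S w = 0}"
  have Z: "finite Z" unfolding Z_def by (rule poly_roots_finite[OF S])
  have "contour_integral (circlepath 0 r) (\<lambda>u. g u / poly S u) =
          2 * pi * \<i> * (\<Sum>w\<in>Z. winding_number (circlepath 0 r) w * residue (\<lambda>u. g u / poly S u) w)"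
  proof (rule Residue_theorem[of "ball 0 R"])
    show "(\<lambda>u. g u / poly S u) holomorphic_on ball 0 R - Z"
      unfolding Z_def by (intro holomorphic_intros holomorphic_on_subset[OF g]) auto
    show "path_image (circlepath 0 r) \<subseteq> ball 0 R - Z"
      using r by (auto simp: path_image_circlepath_nonneg Z_def dest: roots)
    show "\<forall>u. u \<notin> ball 0 R \<longrightarrow> winding_number (circlepath 0 r) u = 0"
      using r by (auto intro!: winding_number_zero_outside[of _ "cball 0 r"]
                       simp: path_image_circlepath_nonneg)
  qed (use Z in \<open>auto simp: convex_connected\<close>)
  also have "\<dots> = 2 * pi * \<i> * (\<Sum>w\<in>Z. g w / poly (pderiv S) w)"
  proof -
    have "winding_number (circlepath 0 r) w = 1" if "w \<in> Z" for w
      using that roots r by (intro winding_number_circlepath) (auto simp: Z_def)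
    moreover have "residue (\<lambda>u. g u / poly S u) w = g w / poly (pderiv S) w" if "w \<in> Z" for w
      using that r simple
      by (intro residue_div_poly_simple_root[OF open_ball _ g]) (auto simp: Z_def dest!: roots)
    ultimately show ?thesis by simp
  qed
  finally show ?thesis unfolding Z_def .
qed

lemma radius_between:
  assumes "finite A" "\<And>w. w \<in> A \<Longrightarrow> cmod w < 1" "1 < R"
  obtains r where "0 < r" "r < 1" "1 / r < R" "\<And>w. w \<in> A \<Longrightarrow> cmod w < r"
proof -
  define m where "m = Max (insert (1 / R) (cmod ` A))"
  have m: "m < 1" "1 / R \<le> m" "\<And>w. w \<in> A \<Longrightarrow> cmod w \<le> m"
    unfolding m_def using assms by (auto simp: Max_less_iff)
  have "0 < 1 / R" using assms(3) by simp
  hence "0 < m" using m(2) by linarith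
  hence pos: "0 < (m + 1) / 2" by simp
  have "m < (m + 1) / 2" using m(1) by (simp add: field_simps)
  hence "1 / R < (m + 1) / 2" using m(2) by linarith
  hence "1 / ((m + 1) / 2) < R" using pos assms(3) by (simp add: divide_less_eq mult.commute)
  moreover have "(m + 1) / 2 < 1" "\<And>w. w \<in> A \<Longrightarrow> cmod w < (m + 1) / 2"
    using m by (auto dest: m(3))
  ultimately show ?thesis using that pos by blast
qed

section \<open>The reflected map \<open>\<phi>\<^sub>e\<close> of a rational self-map of the disc\<close>

text \<open>\<open>circle_reflect_poly d p\<close> is \<open>w\<^sup>d \<cdot> cnj (p (1 / cnj w))\<close>; with \<open>d\<close> the degree of
  \<open>p/q\<close> it turns \<open>\<rho> \<circ> (p/q) \<circ> \<rho>\<close> into the quotient \<open>Q/P\<close> of two such polynomials.\<close>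

definition circle_reflect_poly :: "nat \<Rightarrow> complex poly \<Rightarrow> complex poly" where
  "circle_reflect_poly d p = monom 1 (d - degree p) * reflect_poly (map_poly cnj p)"

lemma degree_map_poly_cnj [simp]: "degree (map_poly cnj p) = degree p"
  by (rule degree_map_poly) simp

lemma poly_circle_reflect_poly:
  assumes "w \<noteq> 0" "degree p \<le> d"
  shows "poly (circle_reflect_poly d p) w = w ^ d * cnj (poly p (1 / cnj w))"
proof -
  have "poly (circle_reflect_poly d p) w = w ^ (d - degree p) * (w ^ degree p * cnj (poly p (cnj (inverse w))))"
    unfolding circle_reflect_poly_def using assms(1)
    by (simp add: poly_monom poly_reflect_poly_nz poly_map_poly_cnj)
  also have "\<dots> = w ^ d * cnj (poly p (1 / cnj w))"
    using assms(2) by (simp add: mult.assoc[symmetric] power_add[symmetric] divide_inverse)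
  finally show ?thesis .
qed

lemma poly_circle_reflect_poly_0:
  assumes "degree p \<le> d"
  shows "poly (circle_reflect_poly d p) 0 = (if degree p = d then cnj (lead_coeff p) else 0)"
  using assms unfolding circle_reflect_poly_def
  by (auto simp: poly_monom poly_reflect_poly_0 coeff_map_poly)

lemma degree_circle_reflect_poly_le: "degree p \<le> d \<Longrightarrow> degree (circle_reflect_poly d p) \<le> d"
  unfolding circle_reflect_poly_def
  by (rule order_trans[OF degree_mult_le])
     (use degree_reflect_poly_le[of "map_poly cnj p"] in \<open>auto simp: degree_monom_eq\<close>)

lemma circle_reflect_poly_nonzero: "p \<noteq> 0 \<Longrightarrow> circle_reflect_poly d p \<noteq> 0"
  unfolding circle_reflect_poly_def by (auto simp: reflect_poly_eq_0_iff map_poly_eq_0_iff)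

locale rat_disc_map =
  fixes p q :: "complex poly" and d :: nat
  assumes in_RatU: "in_RatU p q" and degree: "d = rat_degree p q" and degree_pos: "d > 0"
begin

lemma q_nonzero: "q \<noteq> 0" and coprime: "coprime p q"
  and maps_disc: "\<And>z. cmod z < 1 \<Longrightarrow> poly q z \<noteq> 0 \<and> cmod (poly p z / poly q z) < 1"
  using in_RatU unfolding in_RatU_def by auto

lemma p_nonzero: "p \<noteq> 0"
proof
  assume "p = 0"
  hence "is_unit q" using coprime by (simp add: coprime_0_left_iff)
  hence "degree q = 0" using q_nonzero is_unit_iff_degree by blast
  thus False using degree_pos degree \<open>p = 0\<close> by (simp add: rat_degree_def)
qed

lemma degree_le: "degree p \<le> d" "degree q \<le> d"
  using degree unfolding rat_degree_def by auto

lemma degree_eq: "degree p = d \<or> degree q = d"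
  using degree unfolding rat_degree_def by (auto simp: max_def)

lemma no_common_root: "poly p w = 0 \<Longrightarrow> poly q w \<noteq> 0"
  using coprime_poly_0[OF coprime, of w] by auto

lemma closed_disc_bound:
  assumes "cmod v \<le> 1" shows "cmod (poly p v) \<le> cmod (poly q v)" "poly q v \<noteq> 0"
proof -
  show le: "cmod (poly p v) \<le> cmod (poly q v)"
  proof -
    have "eventually (\<lambda>t. cmod (poly p (of_real t * v)) \<le> cmod (poly q (of_real t * v))) (at_left (1::real))"
    proof (rule eventually_mono[OF eventually_at_left_real[of 0 1]])
      fix t :: real assume t: "t \<in> {0<..<1}"
      have "cmod (of_real t * v) \<le> t" using t assms by (simp add: norm_mult mult_left_le)
      hence "cmod (of_real t * v) < 1" using t by simp
      from maps_disc[OF this] show "cmod (poly p (of_real t * v)) \<le> cmod (poly q (of_real t * v))"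
        by (auto simp: norm_divide divide_less_eq)
    qed simp
    moreover have "((\<lambda>t. cmod (poly p (of_real t * v))) \<longlongrightarrow> cmod (poly p (of_real 1 * v))) (at_left (1::real))"
      "((\<lambda>t. cmod (poly q (of_real t * v))) \<longlongrightarrow> cmod (poly q (of_real 1 * v))) (at_left (1::real))"
      by (intro tendsto_intros)+
    ultimately show ?thesis using tendsto_le[of "at_left (1::real)"] by fastforce
  qed
  show "poly q v \<noteq> 0" using le no_common_root by fastforce
qed

definition \<phi> :: "complex \<Rightarrow> complex" where
  "\<phi> w = poly p w / poly q w"

sublocale C: disc_selfmap \<phi>
proof
  show "\<phi> holomorphic_on ball 0 1"
    unfolding \<phi>_def[abs_def] by (intro holomorphic_intros) (use maps_disc in auto)
  show "cmod (\<phi> w) < 1" if "cmod w < 1" for w using maps_disc[OF that] by (simp add: \<phi>_def)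
qed

definition P :: "complex poly" where "P = circle_reflect_poly d p"
definition Q :: "complex poly" where "Q = circle_reflect_poly d q"

lemma P_nonzero: "P \<noteq> 0"
  unfolding P_def by (rule circle_reflect_poly_nonzero[OF p_nonzero])

lemma poly_P: "w \<noteq> 0 \<Longrightarrow> poly P w = w ^ d * cnj (poly p (1 / cnj w))"
  and poly_Q: "w \<noteq> 0 \<Longrightarrow> poly Q w = w ^ d * cnj (poly q (1 / cnj w))"
  unfolding P_def Q_def using poly_circle_reflect_poly degree_le by auto

lemma poly_P_0: "poly P 0 = (if degree p = d then cnj (lead_coeff p) else 0)"
  and poly_Q_0: "poly Q 0 = (if degree q = d then cnj (lead_coeff q) else 0)"
  unfolding P_def Q_def using poly_circle_reflect_poly_0 degree_le by auto

lemma degree_P_le: "degree P \<le> d" and degree_Q_le: "degree Q \<le> d"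
  unfolding P_def Q_def using degree_circle_reflect_poly_le degree_le by auto

lemma phi_e_Some_nonzero:
  assumes "w \<noteq> 0"
  shows "phi_e p q (Some w) = (if poly P w = 0 then None else Some (poly Q w / poly P w))"
proof -
  define v where "v = 1 / cnj w"
  have P: "poly P w = w ^ d * cnj (poly p v)" and Q: "poly Q w = w ^ d * cnj (poly q v)"
    using poly_P[OF assms] poly_Q[OF assms] by (simp_all add: v_def)
  have wd: "w ^ d \<noteq> 0" using assms by simp
  have "phi_e p q (Some w) = rho (rat_eval p q (Some v))"
    using assms by (simp add: phi_e_def rho_def v_def)
  also have "\<dots> = (if poly P w = 0 then None else Some (poly Q w / poly P w))"
  proof (cases "poly q v = 0")
    case True
    thus ?thesis using no_common_root[of v] wd by (auto simp: rat_eval_def rho_def P Q)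
  next
    case False
    thus ?thesis using wd by (auto simp: rat_eval_def rho_def P Q)
  qed
  finally show ?thesis .
qed

lemma phi_e_Some_0:
  "phi_e p q (Some 0) = (if poly P 0 = 0 then None else Some (poly Q 0 / poly P 0))"
proof -
  have "lead_coeff p \<noteq> 0" "lead_coeff q \<noteq> 0" using p_nonzero q_nonzero by auto
  moreover have "rho (Some 0) = None" by (simp add: rho_def)
  ultimately show ?thesis
    using degree_eq degree_le
    by (auto simp: phi_e_def rat_eval_def rho_def poly_P_0 poly_Q_0 not_less le_antisym)
qed

lemma phi_e_Some: "phi_e p q (Some w) = (if poly P w = 0 then None else Some (poly Q w / poly P w))"
  using phi_e_Some_nonzero phi_e_Some_0 by (cases "w = 0") auto

lemma phi_e_c_eq: "poly P w \<noteq> 0 \<Longrightarrow> phi_e_c p q w = poly Q w / poly P w"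
  unfolding phi_e_c_def phi_e_Some by simp

lemma phi_e_None_ne:
  assumes "cmod z < 1" shows "phi_e p q None \<noteq> Some z"
proof -
  have q0: "poly q 0 \<noteq> 0" and lt: "cmod (poly p 0 / poly q 0) < 1" using maps_disc[of 0] by auto
  show ?thesis
  proof (cases "poly p 0 / poly q 0 = 0")
    case False
    hence "cmod (1 / cnj (poly p 0 / poly q 0)) > 1" using lt by (simp add: norm_divide)
    thus ?thesis using q0 False assms by (auto simp: phi_e_def rho_def rat_eval_def)
  qed (use q0 in \<open>simp add: phi_e_def rho_def rat_eval_def\<close>)
qed

end

context rat_disc_map
begin

definition fiber :: "complex \<Rightarrow> complex set" where
  "fiber z = {w. phi_e p q (Some w) = Some z}"

definition fiber_poly :: "complex \<Rightarrow> complex poly" where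
  "fiber_poly z = Q - smult z P"

lemma fiber_iff: "w \<in> fiber z \<longleftrightarrow> poly P w \<noteq> 0 \<and> poly Q w = z * poly P w"
  unfolding fiber_def phi_e_Some by (auto simp: field_simps)

lemma degree_fiber_poly_le: "degree (fiber_poly z) \<le> d"
  unfolding fiber_poly_def by (rule degree_diff_le[OF degree_Q_le order_trans[OF degree_smult_le degree_P_le]])

context
  fixes z :: complex
  assumes z: "cmod z < 1" and regular: "regular_value (phi_e p q) d (Some z)"
begin

lemma finite_fiber: "finite (fiber z)" and card_fiber: "card (fiber z) = d"
proof -
  have "phi_e p q -` {Some z} = Some ` fiber z"
  proof (intro set_eqI iffI)
    fix x assume "x \<in> phi_e p q -` {Some z}"
    thus "x \<in> Some ` fiber z" using phi_e_None_ne[OF z] by (cases x) (auto simp: fiber_def)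
  qed (auto simp: fiber_def)
  with regular have "finite (Some ` fiber z)" "card (Some ` fiber z) = d"
    unfolding regular_value_def by auto
  thus "finite (fiber z)" "card (fiber z) = d" by (auto simp: card_image finite_image_iff)
qed

lemma fiber_poly_nonzero: "fiber_poly z \<noteq> 0"
proof
  assume R0: "fiber_poly z = 0"
  have "{w. poly P w \<noteq> 0} \<subseteq> fiber z"
  proof
    fix w assume "w \<in> {w. poly P w \<noteq> 0}"
    moreover have "poly Q w = z * poly P w"
      using arg_cong[OF R0, of "\<lambda>r. poly r w"] by (simp add: fiber_poly_def)
    ultimately show "w \<in> fiber z" unfolding fiber_iff by simp
  qed
  hence "finite {w. poly P w \<noteq> 0}" using finite_fiber by (rule finite_subset)
  moreover have "finite {w. poly P w = 0}" by (rule poly_roots_finite[OF P_nonzero])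
  ultimately have "finite ({w. poly P w \<noteq> 0} \<union> {w. poly P w = 0})" by simp
  moreover have "{w. poly P w \<noteq> 0} \<union> {w. poly P w = 0} = (UNIV :: complex set)" by auto
  ultimately show False using infinite_UNIV_char_0[where 'a=complex] by simp
qed

lemma roots_fiber_poly: "{w. poly (fiber_poly z) w = 0} = fiber z"
proof -
  have fin: "finite {w. poly (fiber_poly z) w = 0}" by (rule poly_roots_finite[OF fiber_poly_nonzero])
  have sub: "fiber z \<subseteq> {w. poly (fiber_poly z) w = 0}"
    by (auto simp: fiber_iff fiber_poly_def)
  have "card {w. poly (fiber_poly z) w = 0} \<le> d"
    using card_poly_roots_bound[OF fiber_poly_nonzero] degree_fiber_poly_le by (rule order_trans)
  hence "card (fiber z) = card {w. poly (fiber_poly z) w = 0}"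
    using card_mono[OF fin sub] card_fiber by simp
  from card_subset_eq[OF fin sub this] show ?thesis ..
qed

text \<open>\<open>d\<close> distinct roots of a polynomial of degree at most \<open>d\<close> are all simple.\<close>

lemma fiber_poly_rsquarefree: "rsquarefree (fiber_poly z)"
proof -
  define R where "R = fiber_poly z"
  have R: "R \<noteq> 0" unfolding R_def by (rule fiber_poly_nonzero)
  have roots: "{x. poly R x = 0} = fiber z" unfolding R_def by (rule roots_fiber_poly)
  have order_pos: "1 \<le> order x R" if "x \<in> fiber z" for x
    using that roots R order_root[of R x] by auto
  have "(\<Sum>x\<in>fiber z. order x R) = size (proots R)"
    unfolding size_multiset_overloaded_eq set_count_proots[OF R] roots
    by (intro sum.cong refl) (simp add: count_proots[OF R])
  also have "\<dots> \<le> d" using size_proots_le[of R] degree_fiber_poly_le[of z] by (simp add: R_def)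
  also have "d = (\<Sum>x\<in>fiber z. 1)" using card_fiber by simp
  finally have le: "(\<Sum>x\<in>fiber z. order x R) \<le> (\<Sum>x\<in>fiber z. 1)" .
  have "(\<Sum>x\<in>fiber z. 1) \<le> (\<Sum>x\<in>fiber z. order x R)" by (rule sum_mono) (rule order_pos)
  with le have "(\<Sum>x\<in>fiber z. 1) = (\<Sum>x\<in>fiber z. order x R)" by linarith
  hence "order x R = 1" if "x \<in> fiber z" for x
    using sum_mono_inv[OF _ order_pos that finite_fiber] by simp
  hence "order a R = 0 \<or> order a R = 1" for a
    using roots order_root[of R a] by (cases "a \<in> fiber z") auto
  thus ?thesis unfolding rsquarefree_def R_def[symmetric] using R by blast
qed

lemma fiber_poly_simple_root: "w \<in> fiber z \<Longrightarrow> poly (pderiv (fiber_poly z)) w \<noteq> 0"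
  using fiber_poly_rsquarefree roots_fiber_poly unfolding rsquarefree_roots by blast

end

lemma fiber_in_disc:
  assumes z: "cmod z < 1" and w: "w \<in> fiber z"
  shows "cmod w < 1"
proof (rule ccontr)
  assume "\<not> cmod w < 1"
  hence w1: "1 \<le> cmod w" and w0: "w \<noteq> 0" by auto
  define v where "v = 1 / cnj w"
  have v: "cmod v \<le> 1" using w1 by (simp add: v_def norm_divide divide_le_eq)
  have P: "poly P w = w ^ d * cnj (poly p v)" and Q: "poly Q w = w ^ d * cnj (poly q v)"
    using poly_P[OF w0] poly_Q[OF w0] by (simp_all add: v_def)
  from w have "poly P w \<noteq> 0" "poly Q w = z * poly P w" unfolding fiber_iff by auto
  hence pv: "poly p v \<noteq> 0" and "cnj (poly q v) = z * cnj (poly p v)" using w0 by (auto simp: P Q)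
  hence "cmod (poly q v) = cmod z * cmod (poly p v)" by (metis complex_mod_cnj norm_mult)
  also have "\<dots> < cmod (poly p v)" using z pv by simp
  finally show False using closed_disc_bound(1)[OF v] by simp
qed

lemma deriv_phi_e_c:
  assumes "w \<in> fiber z"
  shows "deriv (phi_e_c p q) w = poly (pderiv (fiber_poly z)) w / poly P w"
proof -
  from assms have P: "poly P w \<noteq> 0" and QP: "poly Q w = z * poly P w" unfolding fiber_iff by auto
  have "((\<lambda>u. poly Q u / poly P u) has_field_derivative
          (poly (pderiv Q) w * poly P w - poly Q w * poly (pderiv P) w) / (poly P w * poly P w)) (at w)"
    by (rule DERIV_divide[OF poly_DERIV poly_DERIV P])
  hence "(phi_e_c p q has_field_derivative
          (poly (pderiv Q) w * poly P w - poly Q w * poly (pderiv P) w) / (poly P w * poly P w)) (at w)"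
  proof (rule has_field_derivative_transform_within_open)
    show "open {u. poly P u \<noteq> 0}" by (rule open_Collect_neq) (auto intro: continuous_intros)
  qed (use P phi_e_c_eq in auto)
  hence "deriv (phi_e_c p q) w =
           (poly (pderiv Q) w * poly P w - poly Q w * poly (pderiv P) w) / (poly P w * poly P w)"
    by (rule DERIV_imp_deriv)
  also have "\<dots> = poly (pderiv (fiber_poly z)) w / poly P w"
    using P unfolding QP by (simp add: fiber_poly_def pderiv_diff pderiv_smult field_simps)
  finally show ?thesis .
qed

definition kernel_den :: "complex \<Rightarrow> complex poly" where
  "kernel_den z = q - smult (cnj z) p"

lemma kernel_den_nonzero_closed_disc:
  assumes z: "cmod z < 1" and v: "cmod v \<le> 1" shows "poly (kernel_den z) v \<noteq> 0"
proof
  assume "poly (kernel_den z) v = 0"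
  hence "cmod (poly q v) = cmod z * cmod (poly p v)" by (simp add: kernel_den_def norm_mult)
  also have "\<dots> \<le> cmod z * cmod (poly q v)" by (intro mult_left_mono closed_disc_bound(1)[OF v]) auto
  also have "\<dots> < cmod (poly q v)" using z closed_disc_bound(2)[OF v] by simp
  finally show False by simp
qed

lemma kernel_den_nonzero_beyond_disc:
  assumes z: "cmod z < 1"
  obtains R where "1 < R" "\<And>v. cmod v < R \<Longrightarrow> poly (kernel_den z) v \<noteq> 0"
proof -
  have D: "kernel_den z \<noteq> 0" using kernel_den_nonzero_closed_disc[OF z, of 0] by auto
  define A where "A = {v. poly (kernel_den z) v = 0}"
  have A: "finite A" unfolding A_def by (rule poly_roots_finite[OF D])
  have "1 < cmod v" if "v \<in> A" for v
    using kernel_den_nonzero_closed_disc[OF z, of v] that by (force simp: A_def)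
  hence "1 < Min (insert 2 (cmod ` A))" using A by (subst Min_gr_iff) auto
  moreover have "poly (kernel_den z) v \<noteq> 0" if "cmod v < Min (insert 2 (cmod ` A))" for v
    using that A Min_le[of "insert 2 (cmod ` A)" "cmod v"] by (force simp: A_def)
  ultimately show ?thesis using that by blast
qed

lemma h2_kernel_comp_eq:
  assumes z: "cmod z < 1" and w: "cmod w < 1"
  shows "h2_kernel z (\<phi> w) = poly q w / poly (kernel_den z) w"
proof -
  have "poly q w \<noteq> 0" using maps_disc[OF w] by simp
  moreover have "poly q w - cnj z * poly p w \<noteq> 0"
    using kernel_den_nonzero_closed_disc[OF z, of w] w by (simp add: kernel_den_def)
  ultimately show ?thesis by (simp add: h2_kernel_def kernel_den_def \<phi>_def field_simps)
qed

lemma cnj_kernel_on_circle: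
  assumes r: "0 < r"
  shows "cnj (poly q (of_real (1/r) * cis_turn t) / poly (kernel_den z) (of_real (1/r) * cis_turn t)) =
         poly Q (of_real r * cis_turn t) / poly (fiber_poly z) (of_real r * cis_turn t)"
proof -
  define w where "w = of_real r * cis_turn t"
  have w0: "w \<noteq> 0" using r by (simp add: w_def)
  have v: "of_real (1/r) * cis_turn t = 1 / cnj w"
    using r by (simp add: w_def cnj_cis_turn field_simps)
  have R: "poly (fiber_poly z) w = w ^ d * cnj (poly (kernel_den z) (1 / cnj w))"
    by (simp add: fiber_poly_def kernel_den_def poly_P[OF w0] poly_Q[OF w0] algebra_simps)
  show ?thesis using w0 unfolding v w_def[symmetric] R poly_Q[OF w0] by simp
qed


lemma adj_fun_circle_integral:
  assumes z: "cmod z < 1" and f: "f \<in> H2" and r: "0 < r" "r < 1"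
    and R: "1 / r < R" "\<And>v. cmod v < R \<Longrightarrow> poly (kernel_den z) v \<noteq> 0"
  shows "((\<lambda>t. f (of_real r * cis_turn t) *
           (poly Q (of_real r * cis_turn t) / poly (fiber_poly z) (of_real r * cis_turn t)))
           has_integral C.adj_fun f z) {0..1}"
proof -
  define k where "k v = poly q v / poly (kernel_den z) v" for v
  have k: "k holomorphic_on ball 0 R" unfolding k_def[abs_def] by (intro holomorphic_intros) (use R in auto)
  define K where "K w = h2_kernel z (\<phi> w)" for w
  have K: "K \<in> H2" unfolding K_def by (rule C.comp_H2(1)[OF h2_kernel_H2[OF z]])
  have coeff: "h2_coeff K n = h2_coeff k n" for n
    by (rule h2_coeff_cong[of 1]) (simp_all add: K_def k_def h2_kernel_comp_eq[OF z])
  have "(\<lambda>n. h2_coeff K n * cnj (h2_coeff f n)) sums h2_inner K f"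
    unfolding h2_inner_def by (rule summable_sums[OF summable_h2_inner[OF K f]])
  hence "(\<lambda>n. h2_coeff f n * cnj (h2_coeff k n)) sums C.adj_fun f z"
    using sums_cnj unfolding C.adj_fun_eq_kernel[OF f z] K_def[symmetric] coeff
    by (fastforce simp: mult.commute)
  moreover have "(\<lambda>n. h2_coeff f n * cnj (h2_coeff k n) * of_real (r ^ n * (1 / r) ^ n)) sums
           integral {0..1} (\<lambda>t. f (of_real r * cis_turn t) * cnj (k (of_real (1 / r) * cis_turn t)))"
    by (rule circle_integral_product_sums[OF H2_D(1)[OF f] k r]) (use r R in auto)
  moreover have "r ^ n * (1 / r) ^ n = 1" for n
    using r by (simp add: power_one_over field_simps)
  ultimately have "C.adj_fun f z =
           integral {0..1} (\<lambda>t. f (of_real r * cis_turn t) * cnj (k (of_real (1 / r) * cis_turn t)))"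
    using sums_unique2 by simp
  moreover have "(\<lambda>t. f (of_real r * cis_turn t) * cnj (k (of_real (1 / r) * cis_turn t))) integrable_on {0..1}"
    by (intro integrable_continuous_real continuous_intros continuous_on_circle_comp[OF H2_D(1)[OF f]]
          continuous_on_circle_comp[OF k]) (use r R in auto)
  ultimately show ?thesis unfolding k_def cnj_kernel_on_circle[OF r(1)] by (simp add: integrable_integral)
qed

lemma contour_integral_fiber_residues:
  assumes z: "cmod z < 1" and regular: "regular_value (phi_e p q) d (Some z)"
    and R0: "poly (fiber_poly z) 0 \<noteq> 0" and g: "g holomorphic_on ball 0 1"
    and r: "0 < r" "r < 1" "\<And>w. w \<in> fiber z \<Longrightarrow> cmod w < r"
  shows "contour_integral (circlepath 0 r) (\<lambda>u. g u / (u * poly (fiber_poly z) u)) =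
           2 * pi * \<i> * (g 0 / poly (fiber_poly z) 0 +
             (\<Sum>w\<in>fiber z. g w / (w * poly (pderiv (fiber_poly z)) w)))"
proof -
  define S where "S = pCons 0 (fiber_poly z)"
  have poly_S: "poly S u = u * poly (fiber_poly z) u" for u by (simp add: S_def)
  have fiber_root: "w \<in> fiber z \<longleftrightarrow> poly (fiber_poly z) w = 0" for w
    using roots_fiber_poly[OF z regular] by blast
  hence roots_S: "{w. poly S w = 0} = insert 0 (fiber z)" by (auto simp: poly_S)
  hence S_root_iff: "poly S w = 0 \<longleftrightarrow> w = 0 \<or> w \<in> fiber z" for w by blast
  have pderiv_S: "poly (pderiv S) u = poly (fiber_poly z) u + u * poly (pderiv (fiber_poly z)) u" for u
    by (simp add: S_def pderiv_pCons)
  have "contour_integral (circlepath 0 r) (\<lambda>u. g u / poly S u) =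
          2 * pi * \<i> * (\<Sum>w\<in>{w. poly S w = 0}. g w / poly (pderiv S) w)"
  proof (rule contour_integral_circlepath_div_poly[OF g r(1,2)])
    show "S \<noteq> 0" using fiber_poly_nonzero[OF z regular] by (simp add: S_def)
    show "cmod w < r" if "poly S w = 0" for w using that r(1,3) by (auto simp: S_root_iff)
    show "poly (pderiv S) w \<noteq> 0" if "poly S w = 0" for w
      using that R0 fiber_root fiber_poly_simple_root[OF z regular] by (auto simp: S_root_iff pderiv_S)
  qed
  also have "(\<Sum>w\<in>{w. poly S w = 0}. g w / poly (pderiv S) w) =
               g 0 / poly (pderiv S) 0 + (\<Sum>w\<in>fiber z. g w / poly (pderiv S) w)"
    unfolding roots_S using finite_fiber[OF z regular] R0 fiber_root by (intro sum.insert) auto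
  also have "(\<Sum>w\<in>fiber z. g w / poly (pderiv S) w) =
               (\<Sum>w\<in>fiber z. g w / (w * poly (pderiv (fiber_poly z)) w))"
    by (intro sum.cong refl) (simp add: pderiv_S fiber_root)
  finally show ?thesis by (simp add: poly_S pderiv_S)
qed

lemma adj_fun_eq_residue_sum:
  assumes z: "cmod z < 1" and regular: "regular_value (phi_e p q) d (Some z)"
    and R0: "poly (fiber_poly z) 0 \<noteq> 0" and f: "f \<in> H2"
  shows "C.adj_fun f z = f 0 * poly Q 0 / poly (fiber_poly z) 0 +
           (\<Sum>w\<in>fiber z. f w * poly Q w / (w * poly (pderiv (fiber_poly z)) w))"
proof -
  obtain R where R: "1 < R" "\<And>v. cmod v < R \<Longrightarrow> poly (kernel_den z) v \<noteq> 0"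
    using kernel_den_nonzero_beyond_disc[OF z] by blast
  obtain r where r: "0 < r" "r < 1" "1 / r < R" "\<And>w. w \<in> fiber z \<Longrightarrow> cmod w < r"
    using radius_between[OF finite_fiber[OF z regular] fiber_in_disc[OF z] R(1)] by blast
  have "((\<lambda>u. f u * poly Q u / (u * poly (fiber_poly z) u)) has_contour_integral
          (2 * of_real pi * \<i> * C.adj_fun f z)) (circlepath 0 r)"
    unfolding has_contour_integral_circlepath_0_iff
    using adj_fun_circle_integral[OF z f r(1,2,3) R(2)] r(1) by simp
  hence "2 * of_real pi * \<i> * C.adj_fun f z =
           contour_integral (circlepath 0 r) (\<lambda>u. f u * poly Q u / (u * poly (fiber_poly z) u))"
    by (rule contour_integral_unique[symmetric])
  also have "\<dots> = 2 * pi * \<i> * (f 0 * poly Q 0 / poly (fiber_poly z) 0 +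
                  (\<Sum>w\<in>fiber z. f w * poly Q w / (w * poly (pderiv (fiber_poly z)) w)))"
    by (rule contour_integral_fiber_residues[OF z regular R0 _ r(1,2,4)])
       (intro holomorphic_intros H2_D(1)[OF f])
  finally show ?thesis by simp
qed

lemma comp_adj_eq_adj_fun:
  assumes f: "f \<in> H2" shows "comp_adj p q f = C.adj_fun f"
  unfolding comp_adj_def
proof (rule the_equality)
  have comp_op: "comp_op p q h = (\<lambda>w. h (\<phi> w))" for h unfolding comp_op_def \<phi>_def ..
  show "C.adj_fun f \<in> H2 \<and> (\<forall>w. 1 \<le> cmod w \<longrightarrow> C.adj_fun f w = 0) \<and>
        (\<forall>h\<in>H2. h2_inner (comp_op p q h) f = h2_inner h (C.adj_fun f))"
    unfolding comp_op using C.adj_fun_H2[OF f] C.adj_fun_outside C.h2_inner_comp_eq_adj[OF f] by auto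
  fix g assume "g \<in> H2 \<and> (\<forall>w. 1 \<le> cmod w \<longrightarrow> g w = 0) \<and> (\<forall>h\<in>H2. h2_inner (comp_op p q h) f = h2_inner h g)"
  thus "g = C.adj_fun f" unfolding comp_op using C.adj_fun_unique[OF f] by blast
qed

lemma residue_sum_eq_fiber_sum:
  "(\<Sum>w\<in>fiber z. f w * poly Q w / (w * poly (pderiv (fiber_poly z)) w)) =
     z * (\<Sum>w\<in>fiber z. f w / (w * deriv (phi_e_c p q) w))"
  unfolding sum_distrib_left
proof (rule sum.cong[OF refl])
  fix w assume w: "w \<in> fiber z"
  hence "poly P w \<noteq> 0" "poly Q w = z * poly P w" unfolding fiber_iff by auto
  thus "f w * poly Q w / (w * poly (pderiv (fiber_poly z)) w) = z * (f w / (w * deriv (phi_e_c p q) w))"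
    unfolding deriv_phi_e_c[OF w] by (simp add: field_simps)
qed

text \<open>When \<open>\<phi>(\<infinity>) = c\<close> is finite, the residue at \<open>0\<close> contributes \<open>k\<^sub>c(z) = 1 / (1 - cnj c * z)\<close>,
  whose pole \<open>z = \<rho>(c)\<close> is excluded by hypothesis.\<close>

lemma fiber_poly_0_finite:
  assumes c: "rat_eval p q None = Some c" "rho (Some c) \<noteq> Some z"
  shows "poly (fiber_poly z) 0 \<noteq> 0" "poly Q 0 / poly (fiber_poly z) 0 = 1 / (1 - cnj c * z)"
proof -
  have lp: "lead_coeff p \<noteq> 0" and lq: "lead_coeff q \<noteq> 0" using p_nonzero q_nonzero by auto
  have "\<not> degree q < degree p" using c by (auto simp: rat_eval_def split: if_splits)
  hence "poly (fiber_poly z) 0 \<noteq> 0 \<and> poly Q 0 / poly (fiber_poly z) 0 = 1 / (1 - cnj c * z)"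
  proof (cases "degree p = degree q")
    case True
    hence d: "degree p = d" "degree q = d" using degree_eq by auto
    have c_eq: "c = lead_coeff p / lead_coeff q" using c True by (simp add: rat_eval_def)
    hence "c \<noteq> 0" using lp lq by simp
    hence "z \<noteq> 1 / cnj c" using c by (auto simp: rho_def)
    hence R0: "poly (fiber_poly z) 0 \<noteq> 0"
      using d lp lq by (auto simp: fiber_poly_def poly_P_0 poly_Q_0 c_eq field_simps)
    moreover have "poly Q 0 / poly (fiber_poly z) 0 = 1 / (1 - cnj c * z)"
      using R0 d lp lq by (simp add: fiber_poly_def poly_P_0 poly_Q_0 c_eq field_simps)
    ultimately show ?thesis by simp
  next
    case False
    hence "degree q = d" "degree p \<noteq> d" using degree_eq degree_le \<open>\<not> degree q < degree p\<close> by auto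
    moreover have "c = 0" using c False \<open>\<not> degree q < degree p\<close> by (simp add: rat_eval_def)
    ultimately show ?thesis using lq by (simp add: fiber_poly_def poly_P_0 poly_Q_0)
  qed
  thus "poly (fiber_poly z) 0 \<noteq> 0" "poly Q 0 / poly (fiber_poly z) 0 = 1 / (1 - cnj c * z)" by auto
qed

lemma fiber_poly_0_infinite:
  assumes "rat_eval p q None = None" "z \<noteq> 0"
  shows "poly (fiber_poly z) 0 \<noteq> 0" "poly Q 0 = 0"
proof -
  have "degree q < degree p" using assms(1) by (auto simp: rat_eval_def split: if_splits)
  hence d: "degree p = d" "degree q \<noteq> d" using degree_eq degree_le by auto
  moreover have "lead_coeff p \<noteq> 0" using p_nonzero by simp
  ultimately show "poly Q 0 = 0" "poly (fiber_poly z) 0 \<noteq> 0"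
    using assms(2) by (simp_all add: fiber_poly_def poly_P_0 poly_Q_0)
qed

theorem adjoint_formula:
  assumes z: "cmod z < 1" and regular: "regular_value (phi_e p q) d (Some z)" and f: "f \<in> H2"
  shows "rat_eval p q None = Some c \<Longrightarrow> rho (Some c) \<noteq> Some z \<Longrightarrow>
           comp_adj p q f z = f 0 / (1 - cnj c * z) + z * (\<Sum>w\<in>fiber z. f w / (w * deriv (phi_e_c p q) w))"
    and "rat_eval p q None = None \<Longrightarrow> z \<noteq> 0 \<Longrightarrow>
           comp_adj p q f z = z * (\<Sum>w\<in>fiber z. f w / (w * deriv (phi_e_c p q) w))"
    and "comp_adj p q f 0 = f 0"
proof -
  note residues = adj_fun_eq_residue_sum[OF z regular _ f, folded comp_adj_eq_adj_fun[OF f],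
                    unfolded residue_sum_eq_fiber_sum]
  show "comp_adj p q f z = f 0 / (1 - cnj c * z) + z * (\<Sum>w\<in>fiber z. f w / (w * deriv (phi_e_c p q) w))"
    if "rat_eval p q None = Some c" "rho (Some c) \<noteq> Some z"
    using residues[OF fiber_poly_0_finite(1)[OF that]] fiber_poly_0_finite(2)[OF that]
    by (simp add: times_divide_eq_right[symmetric])
  show "comp_adj p q f z = z * (\<Sum>w\<in>fiber z. f w / (w * deriv (phi_e_c p q) w))"
    if "rat_eval p q None = None" "z \<noteq> 0"
    using residues[OF fiber_poly_0_infinite(1)[OF that]] fiber_poly_0_infinite(2)[OF that] by simp
  show "comp_adj p q f 0 = f 0" unfolding comp_adj_eq_adj_fun[OF f] by (rule C.adj_fun_0[OF f])
qed

end

theorem corollary2p2: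
  fixes p q :: "complex poly" and f :: "complex \<Rightarrow> complex" and z :: complex and d :: nat
  assumes "in_RatU p q"
    and "d = rat_degree p q" and "d > 0"
    and "cmod z < 1"
    and "regular_value (phi_e p q) d (Some z)"
    and "f \<in> H2"
  shows "(\<forall>c. rat_eval p q None = Some c \<and> rho (Some c) \<noteq> Some z \<longrightarrow>
            comp_adj p q f z = f 0 / (1 - cnj c * z)
              + z * (\<Sum>w\<in>{w. phi_e p q (Some w) = Some z}. f w / (w * deriv (phi_e_c p q) w)))
       \<and> (rat_eval p q None = None \<longrightarrow>
            (z \<noteq> 0 \<longrightarrow> comp_adj p q f z =
               z * (\<Sum>w\<in>{w. phi_e p q (Some w) = Some z}. f w / (w * deriv (phi_e_c p q) w)))
            \<and> comp_adj p q f 0 = f 0)"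
proof -
  interpret rat_disc_map p q d using assms(1-3) by unfold_locales
  show ?thesis using adjoint_formula[OF assms(4-6)] unfolding fiber_def by blast
qed

end
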